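(* Let $Q$ be a quiver. Elements $\Pi=\sum_{x,y,a,b\in Q}R^{xa^*}_{yb^*}\,xa^*yb^*\in\mathcal{V}^2Q$ with $R^{xa^*}_{yb^*}\in\mathbb{C}$, $R^{xa^*}_{yb^*}=-R^{yb^*}_{xa^*}$ (uniform quadratic elements), satisfying $[\Pi,\Pi]_{\mathcal V}=0$ are in one-to-one correspondence, via $\Pi\mapsto r=\sum R^{xa^*}_{yb^*}\,xa^*\otimes yb^*$, with skew-symmetric elements $r\in A_Q\otimes_BA_Q$ satisfying the associative Yang–Baxter equation $r_{12}r_{23}+r_{31}r_{12}+r_{23}r_{31}=0$ in $A_Q$.
   Context: A quiver $Q$ has vertex set $I=\{1,\dots,k\}$, arrows $Q$, head/tail maps $h,t$. The path algebra $\mathbb{C}Q$ has basis the paths (including trivial paths $e_i$), multiplied by concatenation written right to left. $B=\bigoplus_i\mathbb{C}e_i$. The double quiver $\bar Q$ has arrows $Q\cup\{a^*\}$ with $h(a^* )=t(a)$, $t(a^* )=h(a)$; $\mathbb{C}\bar Q^r$ is spanned by paths with exactly $r$ starred arrows. $\mathcal{V}Q$ is the quotient of $\mathbb{C}\bar Q$ by the span of $PR-(-1)^{pr}RP$ ($P\in\mathbb{C}\bar Q^p$, $R\in\mathbb{C}\bar Q^r$). For $w\in\bar Q$, $D_w(x_1\cdots x_n)=\sum_{i:x_i=w}(-1)^{\lambda_i\mu_i}x_{i+1}\cdots x_nx_1\cdots x_{i-1}$, $\lambda_i$ (resp. $\mu_i$) the number of starred arrows among $x_{i+1},\dots,x_n$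 (resp. $x_1,\dots,x_i$). For $\gamma\in\mathcal{V}^rQ,\delta\in\mathcal{V}^sQ$: $[\gamma,\delta]_{\mathcal V}=\sum_{a\in Q}\big(D_{a^*}(\gamma)D_a(\delta)-(-1)^{(r-1)(s-1)}D_{a^*}(\delta)D_a(\gamma)\big)$ modulo the relations. In $\Pi$ only terms for which $xa^*yb^*$ is a nonzero closed path occur. $A_Q$ is the associative algebra with basis the nonzero paths $xa^*$ ($x,a\in Q$) of $\bar Q$, with product $(xa^* )(yb^* )=\delta_{ay}\,xb^*$; it is a $B$-bimodule via left and right multiplication by idempotents $e_i$. For $r=\sum_iu_i\otimes v_i$: $r_{12}r_{23}=\sum_{i,j}u_i\otimes v_iu_j\otimes v_j$, $r_{31}r_{12}=\sum_{i,j}v_ju_i\otimes v_i\otimes u_j$, $r_{23}r_{31}=\sum_{i,j}v_j\otimes u_i\otimes v_iu_j$. $r$ is skew-symmetric if $\sum u_i\otimes v_i=-\sum v_i\otimes u_i$. *)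

theory Defs
  imports Complex_Main
begin

text \<open>An arrow of the double quiver is a pair (a, s) with a in Q; s = False is a,
  s = True is the starred arrow a*.  A path is written as a word x1 ... xn
  (leftmost letter traversed last, product right to left), represented as the
  pair (head vertex, list of letters); the pair (i, []) is the trivial path e_i.\<close>

definition dh :: "('e \<Rightarrow> 'v) \<Rightarrow> ('e \<Rightarrow> 'v) \<Rightarrow> 'e \<times> bool \<Rightarrow> 'v" where
  "dh h t w = (if snd w then t (fst w) else h (fst w))"

definition dt :: "('e \<Rightarrow> 'v) \<Rightarrow> ('e \<Rightarrow> 'v) \<Rightarrow> 'e \<times> bool \<Rightarrow> 'v" where
  "dt h t w = (if snd w then h (fst w) else t (fst w))"

type_synonym ('v, 'e) path = "'v \<times> ('e \<times> bool) list"
type_synonym ('v, 'e) elt = "('v, 'e) path \<Rightarrow> complex"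

definition valid_path :: "'v set \<Rightarrow> 'e set \<Rightarrow> ('e \<Rightarrow> 'v) \<Rightarrow> ('e \<Rightarrow> 'v) \<Rightarrow> ('v, 'e) path \<Rightarrow> bool" where
  "valid_path I Q h t p \<longleftrightarrow> fst p \<in> I \<and> fst ` set (snd p) \<subseteq> Q \<and>
     (snd p \<noteq> [] \<longrightarrow> dh h t (hd (snd p)) = fst p) \<and>
     (\<forall>k. Suc k < length (snd p) \<longrightarrow> dt h t (snd p ! k) = dh h t (snd p ! Suc k))"

definition ptail :: "('e \<Rightarrow> 'v) \<Rightarrow> ('e \<Rightarrow> 'v) \<Rightarrow> ('v, 'e) path \<Rightarrow> 'v" where
  "ptail h t p = (if snd p = [] then fst p else dt h t (last (snd p)))"

definition supp :: "('v, 'e) elt \<Rightarrow> ('v, 'e) path set" where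
  "supp f = {p. f p \<noteq> 0}"

definition is_elt :: "'v set \<Rightarrow> 'e set \<Rightarrow> ('e \<Rightarrow> 'v) \<Rightarrow> ('e \<Rightarrow> 'v) \<Rightarrow> ('v, 'e) elt \<Rightarrow> bool" where
  "is_elt I Q h t f \<longleftrightarrow> finite (supp f) \<and> (\<forall>p. f p \<noteq> 0 \<longrightarrow> valid_path I Q h t p)"

definition pvec :: "('v, 'e) path \<Rightarrow> ('v, 'e) elt" where
  "pvec p = (\<lambda>q. if q = p then 1 else 0)"

definition pmul :: "('e \<Rightarrow> 'v) \<Rightarrow> ('e \<Rightarrow> 'v) \<Rightarrow> ('v, 'e) elt \<Rightarrow> ('v, 'e) elt \<Rightarrow> ('v, 'e) elt" where
  "pmul h t f g = (\<lambda>u. \<Sum>p\<in>supp f. \<Sum>q\<in>supp g.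
      if ptail h t p = fst q \<and> (fst p, snd p @ snd q) = u then f p * g q else 0)"

definition nstar :: "('e \<times> bool) list \<Rightarrow> nat" where
  "nstar xs = length (filter snd xs)"

definition homog :: "('v, 'e) elt \<Rightarrow> nat \<Rightarrow> bool" where
  "homog f r \<longleftrightarrow> (\<forall>p. f p \<noteq> 0 \<longrightarrow> nstar (snd p) = r)"

definition rels :: "'v set \<Rightarrow> 'e set \<Rightarrow> ('e \<Rightarrow> 'v) \<Rightarrow> ('e \<Rightarrow> 'v) \<Rightarrow> ('v, 'e) elt set" where
  "rels I Q h t = {(\<lambda>u. pmul h t P R u - (-1) ^ (p * r) * pmul h t R P u) | P R p r.
      is_elt I Q h t P \<and> is_elt I Q h t R \<and> homog P p \<and> homog R r}"

definition in_cspan :: "('v, 'e) elt set \<Rightarrow> ('v, 'e) elt \<Rightarrow> bool" where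
  "in_cspan S v \<longleftrightarrow> (\<exists>(n::nat) (c::nat \<Rightarrow> complex) g. (\<forall>k<n. g k \<in> S) \<and>
      (\<forall>u. v u = (\<Sum>k<n. c k * g k u)))"

definition Vzero :: "'v set \<Rightarrow> 'e set \<Rightarrow> ('e \<Rightarrow> 'v) \<Rightarrow> ('e \<Rightarrow> 'v) \<Rightarrow> ('v, 'e) elt \<Rightarrow> bool" where
  "Vzero I Q h t v \<longleftrightarrow> in_cspan (rels I Q h t) v"

text \<open>The element of C(double Q) given by the product of the letters of a word
  (the empty product is the unit, the sum of all e_i).\<close>
definition word_elt :: "'v set \<Rightarrow> 'e set \<Rightarrow> ('e \<Rightarrow> 'v) \<Rightarrow> ('e \<Rightarrow> 'v) \<Rightarrow> ('e \<times> bool) list \<Rightarrow> ('v, 'e) elt" where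
  "word_elt I Q h t ys =
     (if ys = [] then (\<lambda>u. if snd u = [] \<and> fst u \<in> I then 1 else 0)
      else if valid_path I Q h t (dh h t (hd ys), ys) then pvec (dh h t (hd ys), ys)
      else (\<lambda>_. 0))"

text \<open>D_w on a path x1...xn (0-indexed position k corresponds to i = k+1).\<close>
definition Dpath :: "'v set \<Rightarrow> 'e set \<Rightarrow> ('e \<Rightarrow> 'v) \<Rightarrow> ('e \<Rightarrow> 'v) \<Rightarrow> 'e \<times> bool \<Rightarrow> ('v, 'e) path \<Rightarrow> ('v, 'e) elt" where
  "Dpath I Q h t w p = (\<lambda>u. \<Sum>k<length (snd p).
      if snd p ! k = w then
        (-1) ^ (nstar (drop (Suc k) (snd p)) * nstar (take (Suc k) (snd p)))
          * word_elt I Q h t (drop (Suc k) (snd p) @ take k (snd p)) u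
      else 0)"

definition Dop :: "'v set \<Rightarrow> 'e set \<Rightarrow> ('e \<Rightarrow> 'v) \<Rightarrow> ('e \<Rightarrow> 'v) \<Rightarrow> 'e \<times> bool \<Rightarrow> ('v, 'e) elt \<Rightarrow> ('v, 'e) elt" where
  "Dop I Q h t w f = (\<lambda>u. \<Sum>p\<in>supp f. f p * Dpath I Q h t w p u)"

text \<open>The bracket [gamma, delta]_V for gamma of degree r and delta of degree s
  (computed on representatives; its vanishing is tested with Vzero).\<close>
definition vbracket :: "'v set \<Rightarrow> 'e set \<Rightarrow> ('e \<Rightarrow> 'v) \<Rightarrow> ('e \<Rightarrow> 'v) \<Rightarrow> nat \<Rightarrow> nat \<Rightarrow>
    ('v, 'e) elt \<Rightarrow> ('v, 'e) elt \<Rightarrow> ('v, 'e) elt" where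
  "vbracket I Q h t r s \<gamma> \<delta> = (\<lambda>u. \<Sum>a\<in>Q.
      pmul h t (Dop I Q h t (a, True) \<gamma>) (Dop I Q h t (a, False) \<delta>) u
      - (-1) ^ ((r - 1) * (s - 1)) * pmul h t (Dop I Q h t (a, True) \<delta>) (Dop I Q h t (a, False) \<gamma>) u)"

definition closed_uq :: "('e \<Rightarrow> 'v) \<Rightarrow> ('e \<Rightarrow> 'v) \<Rightarrow> 'e \<Rightarrow> 'e \<Rightarrow> 'e \<Rightarrow> 'e \<Rightarrow> bool" where
  "closed_uq h t x a y b \<longleftrightarrow> t x = t a \<and> h a = h y \<and> t y = t b \<and> h b = h x"

text \<open>Coefficients R x a y b = R^{xa*}_{yb*}: skew, and (as in the paper) only terms
  with x a* y b* a nonzero closed path occur.\<close>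
definition uq_coeffs :: "'e set \<Rightarrow> ('e \<Rightarrow> 'v) \<Rightarrow> ('e \<Rightarrow> 'v) \<Rightarrow> ('e \<Rightarrow> 'e \<Rightarrow> 'e \<Rightarrow> 'e \<Rightarrow> complex) \<Rightarrow> bool" where
  "uq_coeffs Q h t R \<longleftrightarrow> (\<forall>x a y b. R x a y b = - R y b x a) \<and>
     (\<forall>x a y b. R x a y b \<noteq> 0 \<longrightarrow> x \<in> Q \<and> a \<in> Q \<and> y \<in> Q \<and> b \<in> Q \<and> closed_uq h t x a y b)"

definition PiR :: "'e set \<Rightarrow> ('e \<Rightarrow> 'v) \<Rightarrow> ('e \<Rightarrow> 'e \<Rightarrow> 'e \<Rightarrow> 'e \<Rightarrow> complex) \<Rightarrow> ('v, 'e) elt" where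
  "PiR Q h R = (\<lambda>u. \<Sum>x\<in>Q. \<Sum>a\<in>Q. \<Sum>y\<in>Q. \<Sum>b\<in>Q.
      R x a y b * pvec (h x, [(x, False), (a, True), (y, False), (b, True)]) u)"

text \<open>Basis of A_Q: pairs (x, a) standing for the nonzero path x a*; its left
  idempotent is e_(h x), its right idempotent is e_(h a).\<close>
definition abasis :: "'e set \<Rightarrow> ('e \<Rightarrow> 'v) \<Rightarrow> ('e \<times> 'e) set" where
  "abasis Q t = {(x, a). x \<in> Q \<and> a \<in> Q \<and> t x = t a}"

definition adm2 :: "'e set \<Rightarrow> ('e \<Rightarrow> 'v) \<Rightarrow> ('e \<Rightarrow> 'v) \<Rightarrow> 'e \<times> 'e \<Rightarrow> 'e \<times> 'e \<Rightarrow> bool" where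
  "adm2 Q h t p q \<longleftrightarrow> p \<in> abasis Q t \<and> q \<in> abasis Q t \<and> h (snd p) = h (fst q)"

type_synonym 'e tens2 = "('e \<times> 'e) \<times> ('e \<times> 'e) \<Rightarrow> complex"
type_synonym 'e tens3 = "('e \<times> 'e) \<times> ('e \<times> 'e) \<times> ('e \<times> 'e) \<Rightarrow> complex"

text \<open>Elements of A_Q \<otimes>_B A_Q, as coefficient functions w.r.t. the basis tensors.\<close>
definition is_tens2 :: "'e set \<Rightarrow> ('e \<Rightarrow> 'v) \<Rightarrow> ('e \<Rightarrow> 'v) \<Rightarrow> 'e tens2 \<Rightarrow> bool" where
  "is_tens2 Q h t r \<longleftrightarrow> (\<forall>p q. r (p, q) \<noteq> 0 \<longrightarrow> adm2 Q h t p q)"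

definition basis2 :: "'e set \<Rightarrow> ('e \<Rightarrow> 'v) \<Rightarrow> ('e \<Rightarrow> 'v) \<Rightarrow> 'e \<times> 'e \<Rightarrow> 'e \<times> 'e \<Rightarrow> 'e tens2" where
  "basis2 Q h t p q = (\<lambda>z. if z = (p, q) \<and> adm2 Q h t p q then 1 else 0)"

definition basis3 :: "'e set \<Rightarrow> ('e \<Rightarrow> 'v) \<Rightarrow> ('e \<Rightarrow> 'v) \<Rightarrow> 'e \<times> 'e \<Rightarrow> 'e \<times> 'e \<Rightarrow> 'e \<times> 'e \<Rightarrow> 'e tens3" where
  "basis3 Q h t p q s = (\<lambda>z. if z = (p, q, s) \<and> adm2 Q h t p q \<and> adm2 Q h t q s then 1 else 0)"

text \<open>Product in A_Q: (x a*)(y b*) = delta_{a y} x b*.\<close>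
definition amul_ok :: "'e \<times> 'e \<Rightarrow> 'e \<times> 'e \<Rightarrow> bool" where
  "amul_ok p q \<longleftrightarrow> snd p = fst q"

definition amul :: "'e \<times> 'e \<Rightarrow> 'e \<times> 'e \<Rightarrow> 'e \<times> 'e" where
  "amul p q = (fst p, snd q)"

definition r12r23 :: "'e set \<Rightarrow> ('e \<Rightarrow> 'v) \<Rightarrow> ('e \<Rightarrow> 'v) \<Rightarrow> 'e tens2 \<Rightarrow> 'e tens3" where
  "r12r23 Q h t r = (\<lambda>z. \<Sum>u\<in>abasis Q t. \<Sum>v\<in>abasis Q t. \<Sum>u'\<in>abasis Q t. \<Sum>v'\<in>abasis Q t.
      r (u, v) * r (u', v') *
      (if amul_ok v u' then basis3 Q h t u (amul v u') v' z else 0))"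

definition r31r12 :: "'e set \<Rightarrow> ('e \<Rightarrow> 'v) \<Rightarrow> ('e \<Rightarrow> 'v) \<Rightarrow> 'e tens2 \<Rightarrow> 'e tens3" where
  "r31r12 Q h t r = (\<lambda>z. \<Sum>u\<in>abasis Q t. \<Sum>v\<in>abasis Q t. \<Sum>u'\<in>abasis Q t. \<Sum>v'\<in>abasis Q t.
      r (u, v) * r (u', v') *
      (if amul_ok v' u then basis3 Q h t (amul v' u) v u' z else 0))"

definition r23r31 :: "'e set \<Rightarrow> ('e \<Rightarrow> 'v) \<Rightarrow> ('e \<Rightarrow> 'v) \<Rightarrow> 'e tens2 \<Rightarrow> 'e tens3" where
  "r23r31 Q h t r = (\<lambda>z. \<Sum>u\<in>abasis Q t. \<Sum>v\<in>abasis Q t. \<Sum>u'\<in>abasis Q t. \<Sum>v'\<in>abasis Q t.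
      r (u, v) * r (u', v') *
      (if amul_ok v u' then basis3 Q h t v' u (amul v u') z else 0))"

definition AYBE :: "'e set \<Rightarrow> ('e \<Rightarrow> 'v) \<Rightarrow> ('e \<Rightarrow> 'v) \<Rightarrow> 'e tens2 \<Rightarrow> bool" where
  "AYBE Q h t r \<longleftrightarrow> (\<forall>z. r12r23 Q h t r z + r31r12 Q h t r z + r23r31 Q h t r z = 0)"

definition skew_tens :: "'e set \<Rightarrow> ('e \<Rightarrow> 'v) \<Rightarrow> ('e \<Rightarrow> 'v) \<Rightarrow> 'e tens2 \<Rightarrow> bool" where
  "skew_tens Q h t r \<longleftrightarrow>
     (\<forall>z. r z = - (\<Sum>u\<in>abasis Q t. \<Sum>v\<in>abasis Q t. r (u, v) * basis2 Q h t v u z))"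

definition r_of :: "'e set \<Rightarrow> ('e \<Rightarrow> 'v) \<Rightarrow> ('e \<Rightarrow> 'v) \<Rightarrow> ('e \<Rightarrow> 'e \<Rightarrow> 'e \<Rightarrow> 'e \<Rightarrow> complex) \<Rightarrow> 'e tens2" where
  "r_of Q h t R = (\<lambda>z. \<Sum>x\<in>Q. \<Sum>a\<in>Q. \<Sum>y\<in>Q. \<Sum>b\<in>Q. R x a y b * basis2 Q h t (x, a) (y, b) z)"

end

theory Submission
  imports Defs
begin

text \<open>
  Both correspondences are read off with cyclic trace functionals.  For a cyclic word w of the
  double quiver and signs s compatible with the graded commutators, the functional
  f |-> sum_k s_k f(rotate k w) kills every relation PR - (-1)^(pr) RP, so it is defined on V Q.
  On the words x a* y b* it recovers the coefficients of Pi, which gives injectivity.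
  Computing the double derivatives gives [Pi,Pi] = 8 sum_T C_T x a* y d* z e* with
  C_T = sum_c R^{xa*}_{yc*} R^{cd*}_{ze*}, and the three terms of the associative Yang-Baxter
  equation at x a* (x) y d* (x) z e* are C at the three even rotations of that word.  The trace
  functional of the word (with all signs +1, as the word has three starred letters) turns the
  vanishing of [Pi,Pi] into the vanishing of these sums.  Conversely, rotating such a word by
  two letters is a graded commutator with sign +1, so a combination of the words whose
  coefficients sum to zero on every rotation orbit is zero in V Q.
\<close>

section \<open>Cyclic words and trace functionals\<close>

definition cyclic_word :: "('e \<Rightarrow> 'v) \<Rightarrow> ('e \<Rightarrow> 'v) \<Rightarrow> ('e \<times> bool) list \<Rightarrow> bool" where
  "cyclic_word h t ws \<longleftrightarrow>
     (\<forall>i<length ws. dt h t (ws ! i) = dh h t (ws ! (Suc i mod length ws)))"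

definition word_path :: "('e \<Rightarrow> 'v) \<Rightarrow> ('e \<Rightarrow> 'v) \<Rightarrow> ('e \<times> bool) list \<Rightarrow> ('v, 'e) path" where
  "word_path h t ws = (dh h t (hd ws), ws)"

definition cyclic_trace :: "('e \<Rightarrow> 'v) \<Rightarrow> ('e \<Rightarrow> 'v) \<Rightarrow> (nat \<Rightarrow> complex) \<Rightarrow> ('e \<times> bool) list \<Rightarrow>
    ('v, 'e) elt \<Rightarrow> complex" where
  "cyclic_trace h t s w f = (\<Sum>k<length w. s k * f (word_path h t (rotate k w)))"

text \<open>Moving the first m letters of rotate k w to the end costs the graded commutation sign.\<close>
definition graded_cyclic_signs :: "(nat \<Rightarrow> complex) \<Rightarrow> ('e \<times> bool) list \<Rightarrow> bool" where
  "graded_cyclic_signs s w \<longleftrightarrow> (\<forall>k<length w. \<forall>m\<le>length w.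
     s k = (-1) ^ (nstar (take m (rotate k w)) * nstar (drop m (rotate k w))) * s ((k + m) mod length w))"

lemma cyclic_word_rotate:
  assumes "cyclic_word h t ws"
  shows "cyclic_word h t (rotate k ws)"
  unfolding cyclic_word_def
proof (intro allI impI)
  fix i assume i: "i < length (rotate k ws)"
  let ?n = "length ws"
  have n: "?n > 0" using i by (cases ws) auto
  have "(k + Suc i mod ?n) mod ?n = Suc ((k + i) mod ?n) mod ?n"
    by (simp add: mod_add_right_eq mod_Suc_eq)
  then have "rotate k ws ! (Suc i mod ?n) = ws ! (Suc ((k + i) mod ?n) mod ?n)"
    using n by (simp add: nth_rotate)
  moreover have "rotate k ws ! i = ws ! ((k + i) mod ?n)" using i by (simp add: nth_rotate)
  moreover have "(k + i) mod ?n < ?n" using n by simp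
  ultimately show "dt h t (rotate k ws ! i) = dh h t (rotate k ws ! (Suc i mod length (rotate k ws)))"
    using assms unfolding cyclic_word_def by simp
qed

lemma cyclic_word_last_hd:
  assumes "cyclic_word h t ws" "ws \<noteq> []"
  shows "dt h t (last ws) = dh h t (hd ws)"
proof -
  have "length ws - 1 < length ws" "Suc (length ws - 1) mod length ws = 0" using assms(2) by simp_all
  then have "dt h t (ws ! (length ws - 1)) = dh h t (ws ! 0)"
    using assms(1) unfolding cyclic_word_def by metis
  then show ?thesis using assms(2) by (simp add: last_conv_nth hd_conv_nth)
qed

lemma cyclic_word_append:
  assumes "cyclic_word h t (p @ q)" "p \<noteq> []" "q \<noteq> []"
  shows "dt h t (last p) = dh h t (hd q)" "dt h t (last q) = dh h t (hd p)"
proof -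
  let ?n = "length (p @ q)"
  have "Suc (length p - 1) mod ?n = length p" "length p - 1 < ?n" using assms by (simp, cases p, auto)
  then have "dt h t ((p @ q) ! (length p - 1)) = dh h t ((p @ q) ! length p)"
    using assms(1) unfolding cyclic_word_def by metis
  then show "dt h t (last p) = dh h t (hd q)"
    using assms by (simp add: last_conv_nth hd_conv_nth nth_append)
  show "dt h t (last q) = dh h t (hd p)"
    using cyclic_word_last_hd[OF assms(1)] assms(2,3) by simp
qed

lemma valid_path_head: "valid_path I Q h t p \<Longrightarrow> snd p \<noteq> [] \<Longrightarrow> fst p = dh h t (hd (snd p))"
  unfolding valid_path_def by simp

lemma append_eq_rotate_swap:
  "xs @ ys = rotate k w \<longleftrightarrow> ys @ xs = rotate (k + length xs) w"
proof
  assume "xs @ ys = rotate k w"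
  then have "rotate (length xs) (xs @ ys) = rotate (length xs) (rotate k w)" by simp
  then show "ys @ xs = rotate (k + length xs) w" by (simp add: rotate_rotate add.commute rotate_append)
next
  assume yx: "ys @ xs = rotate (k + length xs) w"
  have len: "length xs + length ys = length w" using arg_cong[OF yx, of length] by simp
  have "rotate (length ys) (ys @ xs) = rotate (length ys + (k + length xs)) w"
    by (simp add: yx rotate_rotate)
  also have "length ys + (k + length xs) = k + length w" using len by simp
  also have "rotate (k + length w) w = rotate k w" by (metis rotate_conv_mod mod_add_self2)
  finally show "xs @ ys = rotate k w" by (simp add: rotate_append)
qed

text \<open>Composability of the two products comes for free from cyclicity.\<close>
lemma concat_rotate_iff:
  assumes cyc: "cyclic_word h t w" and ne: "w \<noteq> []"
    and vp: "valid_path I Q h t p" and vq: "valid_path I Q h t q"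
  shows "(ptail h t p = fst q \<and> (fst p, snd p @ snd q) = word_path h t (rotate k w)) \<longleftrightarrow>
         (ptail h t q = fst p \<and> (fst q, snd q @ snd p) = word_path h t (rotate (k + length (snd p)) w))"
proof (cases "snd p @ snd q = rotate k w")
  case False
  then show ?thesis using append_eq_rotate_swap by (auto simp: word_path_def)
next
  case True
  have c: "cyclic_word h t (snd p @ snd q)" using True cyclic_word_rotate[OF cyc] by simp
  have nz: "snd p @ snd q \<noteq> []" using True ne by simp
  have "(ptail h t p = fst q \<and> fst p = dh h t (hd (snd p @ snd q))) \<longleftrightarrow>
        (ptail h t q = fst p \<and> fst q = dh h t (hd (snd q @ snd p)))"
  proof (cases "snd p = []")
    case True
    then show ?thesis
      using valid_path_head[OF vq] nz c cyclic_word_last_hd[of h t "snd q"] by (auto simp: ptail_def)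
  next
    case False
    note pne = this
    show ?thesis
    proof (cases "snd q = []")
      case True
      then show ?thesis
        using valid_path_head[OF vp] pne c cyclic_word_last_hd[of h t "snd p"] by (auto simp: ptail_def)
    next
      case False
      then show ?thesis using valid_path_head[OF vp] valid_path_head[OF vq] cyclic_word_append[OF c pne]
        by (auto simp: ptail_def hd_append2 pne)
    qed
  qed
  then show ?thesis using True append_eq_rotate_swap[of "snd p" "snd q" k w] by (auto simp: word_path_def)
qed

lemma sum_lessThan_rotate:
  assumes n: "(n::nat) > 0"
  shows "(\<Sum>k<n. f ((k + m) mod n)) = (\<Sum>k<n. f k :: 'a::comm_monoid_add)"
proof -
  have inj: "inj_on (\<lambda>k. (k + m) mod n) {..<n}"
  proof (rule inj_onI)
    fix k k' assume kk: "k \<in> {..<n}" "k' \<in> {..<n}" and "(k + m) mod n = (k' + m) mod n"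
    then obtain q1 q2 where "k + m + n * q1 = k' + m + n * q2" using nat_mod_eq_iff by blast
    then have "k mod n = k' mod n" using nat_mod_eq_iff[of k n k'] by auto
    then show "k = k'" using kk by simp
  qed
  have "(\<lambda>k. (k + m) mod n) ` {..<n} \<subseteq> {..<n}" using n by auto
  then have "(\<lambda>k. (k + m) mod n) ` {..<n} = {..<n}" by (rule endo_inj_surj[OF finite_lessThan _ inj])
  then show ?thesis using sum.reindex[OF inj, of f] by simp
qed

lemma supp_pvec: "supp (pvec p) = {p}"
  unfolding supp_def pvec_def by auto

lemma pmul_pvec:
  "pmul h t (pvec p) (pvec q) u = (if ptail h t p = fst q \<and> (fst p, snd p @ snd q) = u then 1 else 0)"
  unfolding pmul_def supp_pvec by (simp add: pvec_def)

lemma pmul_eq_sum_pmul_pvec: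
  "pmul h t P R u = (\<Sum>p\<in>supp P. \<Sum>q\<in>supp R. P p * R q * pmul h t (pvec p) (pvec q) u)"
  unfolding pmul_pvec by (auto simp: pmul_def intro!: sum.cong)

lemma cyclic_trace_sum:
  "cyclic_trace h t s w (\<lambda>u. \<Sum>i\<in>A. g i u) = (\<Sum>i\<in>A. cyclic_trace h t s w (g i))"
  unfolding cyclic_trace_def by (simp add: sum_distrib_left) (rule sum.swap)

lemma cyclic_trace_scale: "cyclic_trace h t s w (\<lambda>u. c * g u) = c * cyclic_trace h t s w g"
  unfolding cyclic_trace_def by (simp add: sum_distrib_left mult_ac)

lemma cyclic_trace_diff:
  "cyclic_trace h t s w (\<lambda>u. f u - g u) = cyclic_trace h t s w f - cyclic_trace h t s w g"
  unfolding cyclic_trace_def by (simp add: right_diff_distrib sum_subtractf)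

lemma cyclic_trace_commutator:
  assumes cyc: "cyclic_word h t w" and ne: "w \<noteq> []" and signs: "graded_cyclic_signs s w"
    and vp: "valid_path I Q h t p" and vq: "valid_path I Q h t q"
  shows "cyclic_trace h t s w (pmul h t (pvec p) (pvec q)) =
    (-1) ^ (nstar (snd p) * nstar (snd q)) * cyclic_trace h t s w (pmul h t (pvec q) (pvec p))"
proof -
  let ?n = "length w" and ?m = "length (snd p)" and ?c = "(-1) ^ (nstar (snd p) * nstar (snd q)) :: complex"
  define coeff where "coeff p q k = pmul h t (pvec p) (pvec q) (word_path h t (rotate k w))" for p q k
  have n: "?n > 0" using ne by simp
  have shift: "s k * coeff p q k = ?c * (s ((k + ?m) mod ?n) * coeff q p ((k + ?m) mod ?n))"
    if k: "k < ?n" for k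
  proof -
    have "rotate (k + ?m) w = rotate ((k + ?m) mod ?n) w" by (metis rotate_conv_mod)
    then have swap: "coeff p q k = coeff q p ((k + ?m) mod ?n)"
      unfolding coeff_def pmul_pvec using concat_rotate_iff[OF cyc ne vp vq, of k] by simp
    show ?thesis
    proof (cases "coeff p q k = 0")
      case False
      then have pq: "snd p @ snd q = rotate k w"
        unfolding coeff_def pmul_pvec word_path_def by (simp split: if_splits)
      then have "?m \<le> ?n" by (metis le_add1 length_append length_rotate)
      moreover have "take ?m (rotate k w) = snd p" "drop ?m (rotate k w) = snd q"
        using pq by (metis append_eq_conv_conj)+
      ultimately have "s k = ?c * s ((k + ?m) mod ?n)"
        using signs k unfolding graded_cyclic_signs_def by metis
      then show ?thesis using swap by simp
    qed (use swap in simp)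
  qed
  have "cyclic_trace h t s w (pmul h t (pvec p) (pvec q)) = (\<Sum>k<?n. s k * coeff p q k)"
    by (simp add: cyclic_trace_def coeff_def)
  also have "\<dots> = ?c * (\<Sum>k<?n. s ((k + ?m) mod ?n) * coeff q p ((k + ?m) mod ?n))"
    unfolding sum_distrib_left by (rule sum.cong) (simp_all add: shift)
  also have "(\<Sum>k<?n. s ((k + ?m) mod ?n) * coeff q p ((k + ?m) mod ?n)) = (\<Sum>k<?n. s k * coeff q p k)"
    by (rule sum_lessThan_rotate[OF n])
  also have "\<dots> = cyclic_trace h t s w (pmul h t (pvec q) (pvec p))"
    by (simp add: cyclic_trace_def coeff_def)
  finally show ?thesis .
qed

lemma cyclic_trace_rels:
  assumes cyc: "cyclic_word h t w" and ne: "w \<noteq> []" and signs: "graded_cyclic_signs s w"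
    and g: "g \<in> rels I Q h t"
  shows "cyclic_trace h t s w g = 0"
proof -
  obtain P R dP dR where g_eq: "g = (\<lambda>u. pmul h t P R u - (-1) ^ (dP * dR) * pmul h t R P u)"
    and P: "is_elt I Q h t P" "homog P dP" and R: "is_elt I Q h t R" "homog R dR"
    using g unfolding rels_def by blast
  let ?c = "(-1) ^ (dP * dR) :: complex" and ?tr = "cyclic_trace h t s w"
  have RP: "pmul h t R P u = (\<Sum>p\<in>supp P. \<Sum>q\<in>supp R. P p * R q * pmul h t (pvec q) (pvec p) u)"
    for u by (subst pmul_eq_sum_pmul_pvec, subst sum.swap) (simp add: mult.commute)
  have "g = (\<lambda>u. \<Sum>p\<in>supp P. \<Sum>q\<in>supp R.
      P p * R q * (pmul h t (pvec p) (pvec q) u - ?c * pmul h t (pvec q) (pvec p) u))"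
    unfolding g_eq RP pmul_eq_sum_pmul_pvec[of h t P R]
    by (simp add: sum_distrib_left sum_subtractf right_diff_distrib mult.left_commute)
  then have "?tr g = (\<Sum>p\<in>supp P. \<Sum>q\<in>supp R.
      P p * R q * (?tr (pmul h t (pvec p) (pvec q)) - ?c * ?tr (pmul h t (pvec q) (pvec p))))"
    by (simp add: cyclic_trace_sum cyclic_trace_scale cyclic_trace_diff)
  also have "\<dots> = 0"
  proof (intro sum.neutral ballI)
    fix p q assume "p \<in> supp P" "q \<in> supp R"
    then have vp: "valid_path I Q h t p" and vq: "valid_path I Q h t q"
      and "nstar (snd p) = dP" "nstar (snd q) = dR"
      using P R unfolding is_elt_def homog_def supp_def by blast+
    then show "P p * R q * (?tr (pmul h t (pvec p) (pvec q)) - ?c * ?tr (pmul h t (pvec q) (pvec p))) = 0"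
      using cyclic_trace_commutator[OF cyc ne signs vp vq] by simp
  qed
  finally show ?thesis .
qed

lemma cyclic_trace_Vzero:
  assumes cyc: "cyclic_word h t w" and ne: "w \<noteq> []" and signs: "graded_cyclic_signs s w"
    and v: "Vzero I Q h t v"
  shows "cyclic_trace h t s w v = 0"
proof -
  obtain n :: nat and c g where g: "\<forall>k<n. g k \<in> rels I Q h t" and v_eq: "\<forall>u. v u = (\<Sum>k<n. c k * g k u)"
    using v unfolding Vzero_def in_cspan_def by blast
  then have "v = (\<lambda>u. \<Sum>k<n. c k * g k u)" by auto
  then show ?thesis
    using cyclic_trace_rels[OF cyc ne signs] g
    by (auto simp: cyclic_trace_sum cyclic_trace_scale intro!: sum.neutral)
qed

section \<open>Elements of the ideal of relations\<close>

lemma Vzero_zero: "Vzero I Q h t (\<lambda>u. 0)"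
  unfolding Vzero_def in_cspan_def by (rule exI[of _ 0]) simp

lemma Vzero_rel: "g \<in> rels I Q h t \<Longrightarrow> Vzero I Q h t g"
  unfolding Vzero_def in_cspan_def
  by (rule exI[of _ 1], rule exI[of _ "\<lambda>_. 1"], rule exI[of _ "\<lambda>_. g"]) simp

lemma Vzero_ext:
  assumes "Vzero I Q h t f" "\<And>u. f u = g u"
  shows "Vzero I Q h t g"
proof -
  have "f = g" using assms(2) by (rule ext)
  then show ?thesis using assms(1) by simp
qed

lemma sum_lessThan_add: "(\<Sum>k<m + (n::nat). f k) = (\<Sum>k<m. f k) + (\<Sum>k<n. f (m + k) :: 'a::comm_monoid_add)"
  by (induct n) (simp_all add: add.assoc)

lemma Vzero_add:
  assumes "Vzero I Q h t f" "Vzero I Q h t g"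
  shows "Vzero I Q h t (\<lambda>u. f u + g u)"
proof -
  obtain n1 :: nat and c1 g1 where 1: "\<forall>k<n1. g1 k \<in> rels I Q h t" "\<forall>u. f u = (\<Sum>k<n1. c1 k * g1 k u)"
    using assms(1) unfolding Vzero_def in_cspan_def by blast
  obtain n2 :: nat and c2 g2 where 2: "\<forall>k<n2. g2 k \<in> rels I Q h t" "\<forall>u. g u = (\<Sum>k<n2. c2 k * g2 k u)"
    using assms(2) unfolding Vzero_def in_cspan_def by blast
  define c where "c k = (if k < n1 then c1 k else c2 (k - n1))" for k
  define gg where "gg k = (if k < n1 then g1 k else g2 (k - n1))" for k
  have "\<forall>k<n1 + n2. gg k \<in> rels I Q h t" using 1 2 unfolding gg_def by auto
  moreover have "\<forall>u. f u + g u = (\<Sum>k<n1 + n2. c k * gg k u)"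
    unfolding sum_lessThan_add using 1 2 by (simp add: c_def gg_def)
  ultimately show ?thesis unfolding Vzero_def in_cspan_def by (intro exI[of _ "n1 + n2"] exI conjI)
qed

lemma Vzero_scale:
  assumes "Vzero I Q h t f"
  shows "Vzero I Q h t (\<lambda>u. a * f u)"
proof -
  obtain n :: nat and c g where "\<forall>k<n. g k \<in> rels I Q h t" "\<forall>u. f u = (\<Sum>k<n. c k * g k u)"
    using assms unfolding Vzero_def in_cspan_def by blast
  moreover from this(2) have "\<forall>u. a * f u = (\<Sum>k<n. (a * c k) * g k u)"
    by (simp add: sum_distrib_left mult_ac)
  ultimately show ?thesis unfolding Vzero_def in_cspan_def by (intro exI[of _ n] exI conjI)
qed

lemma Vzero_sum:
  assumes "finite A" "\<And>i. i \<in> A \<Longrightarrow> Vzero I Q h t (F i)"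
  shows "Vzero I Q h t (\<lambda>u. \<Sum>i\<in>A. F i u)"
  using assms
proof (induction A rule: finite_induct)
  case empty
  then show ?case using Vzero_zero by simp
next
  case (insert x A)
  then have "Vzero I Q h t (\<lambda>u. F x u + (\<Sum>i\<in>A. F i u))" by (intro Vzero_add) auto
  then show ?case using insert by simp
qed

lemma Vzero_commutator_pvec:
  assumes "valid_path I Q h t p" "valid_path I Q h t q" "ptail h t p = fst q" "ptail h t q = fst p"
  shows "Vzero I Q h t (\<lambda>u. pvec (fst p, snd p @ snd q) u
                          - (-1) ^ (nstar (snd p) * nstar (snd q)) * pvec (fst q, snd q @ snd p) u)"
proof -
  have "is_elt I Q h t (pvec p)" "is_elt I Q h t (pvec q)"
    using assms(1,2) unfolding is_elt_def supp_pvec by (auto simp: pvec_def split: if_splits)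
  moreover have "homog (pvec p) (nstar (snd p))" "homog (pvec q) (nstar (snd q))"
    unfolding homog_def pvec_def by auto
  ultimately have "(\<lambda>u. pmul h t (pvec p) (pvec q) u
      - (-1) ^ (nstar (snd p) * nstar (snd q)) * pmul h t (pvec q) (pvec p) u) \<in> rels I Q h t"
    unfolding rels_def by blast
  then have "Vzero I Q h t (\<lambda>u. pmul h t (pvec p) (pvec q) u
      - (-1) ^ (nstar (snd p) * nstar (snd q)) * pmul h t (pvec q) (pvec p) u)"
    by (rule Vzero_rel)
  moreover have pvec_apply: "pvec r u = (if r = u then 1 else 0)" for r u by (auto simp: pvec_def)
  ultimately show ?thesis
    by (elim Vzero_ext) (simp only: pmul_pvec assms(3,4) simp_thms pvec_apply)
qed

section \<open>Coefficients of uniform quadratic elements\<close>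

lemma uq_coeffs_skew: "uq_coeffs Q h t R \<Longrightarrow> R x a y b = - R y b x a"
  unfolding uq_coeffs_def by blast

lemma uq_coeffs_nonzero:
  "uq_coeffs Q h t R \<Longrightarrow> R x a y b \<noteq> 0 \<Longrightarrow> x \<in> Q \<and> a \<in> Q \<and> y \<in> Q \<and> b \<in> Q \<and> closed_uq h t x a y b"
  unfolding uq_coeffs_def by blast

lemma closed_uq_adm2:
  "closed_uq h t x a y b \<Longrightarrow> x \<in> Q \<Longrightarrow> a \<in> Q \<Longrightarrow> y \<in> Q \<Longrightarrow> b \<in> Q \<Longrightarrow>
   adm2 Q h t (x, a) (y, b) \<and> adm2 Q h t (y, b) (x, a)"
  unfolding closed_uq_def adm2_def abasis_def by auto

lemma finite_abasis: "finite Q \<Longrightarrow> finite (abasis Q t)"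
  unfolding abasis_def by (rule finite_subset[of _ "Q \<times> Q"]) auto

lemma sum_if_const: "(\<Sum>i\<in>A. if P then f i else 0) = (if P then \<Sum>i\<in>A. f i else 0)"
  by simp

lemma sum_delta2:
  assumes "finite A"
  shows "(\<Sum>u\<in>A. \<Sum>v\<in>A. if u = p \<and> v = q then F u v else 0) = (if p \<in> A \<and> q \<in> A then F p q else 0 :: complex)"
proof -
  have "(if u = p \<and> v = q then F u v else 0) = (if u = p then if v = q then F p q else 0 else 0)" for u v
    by simp
  then show ?thesis using assms by (simp add: sum.delta' sum_if_const cong: if_cong)
qed

lemma sum_delta4:
  assumes "finite Q"
  shows "(\<Sum>x'\<in>Q. \<Sum>a'\<in>Q. \<Sum>y'\<in>Q. \<Sum>b'\<in>Q. if x' = x \<and> a' = a \<and> y' = y \<and> b' = b then F x' a' y' b' else 0)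
     = (if x \<in> Q \<and> a \<in> Q \<and> y \<in> Q \<and> b \<in> Q then F x a y b else 0 :: complex)"
proof -
  have "(if x' = x \<and> a' = a \<and> y' = y \<and> b' = b then F x' a' y' b' else 0) =
      (if x' = x then if a' = a then if y' = y then if b' = b then F x a y b else 0 else 0 else 0 else 0)"
    for x' a' y' b' by simp
  then show ?thesis using assms by (simp add: sum.delta' sum_if_const cong: if_cong)
qed

lemma r_of_eq:
  assumes "finite Q" and uq: "uq_coeffs Q h t R"
  shows "r_of Q h t R = (\<lambda>((x, a), (y, b)). R x a y b)"
proof (intro ext, clarify)
  fix x a y b
  have "r_of Q h t R ((x, a), (y, b)) = (\<Sum>x'\<in>Q. \<Sum>a'\<in>Q. \<Sum>y'\<in>Q. \<Sum>b'\<in>Q.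
      if x' = x \<and> a' = a \<and> y' = y \<and> b' = b then R x' a' y' b' * (if adm2 Q h t (x', a') (y', b') then 1 else 0) else 0)"
    unfolding r_of_def basis2_def by (intro sum.cong refl) auto
  also have "\<dots> = R x a y b"
    using sum_delta4[OF assms(1)] uq_coeffs_nonzero[OF uq, of x a y b] closed_uq_adm2[of h t x a y b Q] by auto
  finally show "r_of Q h t R ((x, a), (y, b)) = R x a y b" .
qed

lemma sum_transpose_basis2:
  assumes "finite Q"
  shows "(\<Sum>u\<in>abasis Q t. \<Sum>v\<in>abasis Q t. r (u, v) * basis2 Q h t v u (p, q)) =
    (if adm2 Q h t p q then r (q, p) else 0)"
proof -
  have "(\<Sum>u\<in>abasis Q t. \<Sum>v\<in>abasis Q t. r (u, v) * basis2 Q h t v u (p, q)) =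
      (\<Sum>u\<in>abasis Q t. \<Sum>v\<in>abasis Q t. if u = q \<and> v = p then r (u, v) * (if adm2 Q h t p q then 1 else 0) else 0)"
    unfolding basis2_def by (intro sum.cong refl) auto
  also have "\<dots> = (if adm2 Q h t p q then r (q, p) else 0)"
    by (simp add: sum_delta2[OF finite_abasis[OF assms]] adm2_def)
  finally show ?thesis .
qed

lemma r_of_tens2_skew:
  assumes fQ: "finite Q" and uq: "uq_coeffs Q h t R"
  shows "is_tens2 Q h t (r_of Q h t R) \<and> skew_tens Q h t (r_of Q h t R)"
proof
  show "is_tens2 Q h t (r_of Q h t R)"
    unfolding is_tens2_def r_of_eq[OF fQ uq]
    using uq_coeffs_nonzero[OF uq] closed_uq_adm2 by fastforce
  show "skew_tens Q h t (r_of Q h t R)"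
    unfolding skew_tens_def
  proof (intro allI, clarify)
    fix x a y b
    have "R x a y b = - (if adm2 Q h t (x, a) (y, b) then R y b x a else 0)"
      using uq_coeffs_nonzero[OF uq, of x a y b] closed_uq_adm2[of h t x a y b Q] uq_coeffs_skew[OF uq, of x a y b]
      by auto
    then show "r_of Q h t R ((x, a), y, b) =
        - (\<Sum>u\<in>abasis Q t. \<Sum>v\<in>abasis Q t. r_of Q h t R (u, v) * basis2 Q h t v u ((x, a), y, b))"
      unfolding sum_transpose_basis2[OF fQ] by (simp add: r_of_eq[OF fQ uq])
  qed
qed

lemma r_of_surj:
  assumes fQ: "finite Q" and r: "is_tens2 Q h t r" "skew_tens Q h t r"
  shows "\<exists>R. uq_coeffs Q h t R \<and> r_of Q h t R = r"
proof -
  define R where "R x a y b = r ((x, a), (y, b))" for x a y b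
  have skew: "R x a y b = - (if adm2 Q h t (x, a) (y, b) then R y b x a else 0)" for x a y b
    using r(2) sum_transpose_basis2[OF fQ, where r = r and h = h and p = "(x, a)" and q = "(y, b)"] unfolding skew_tens_def R_def by simp
  have adm: "R x a y b \<noteq> 0 \<Longrightarrow> adm2 Q h t (x, a) (y, b)" for x a y b
    using r(1) unfolding is_tens2_def R_def by blast
  have uq: "uq_coeffs Q h t R"
    unfolding uq_coeffs_def
  proof (rule conjI; intro allI impI)
    fix x a y b
    show "R x a y b = - R y b x a"
      using skew[of x a y b] skew[of y b x a] by (cases "adm2 Q h t (x, a) (y, b)") auto
  next
    fix x a y b
    assume "R x a y b \<noteq> 0"
    moreover from this have "R y b x a \<noteq> 0" using skew[of x a y b] by (auto split: if_splits)
    ultimately have "adm2 Q h t (x, a) (y, b)" "adm2 Q h t (y, b) (x, a)" using adm by blast+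
    then show "x \<in> Q \<and> a \<in> Q \<and> y \<in> Q \<and> b \<in> Q \<and> closed_uq h t x a y b"
      unfolding adm2_def abasis_def closed_uq_def by auto
  qed
  moreover have "r_of Q h t R = r" by (auto simp: r_of_eq[OF fQ uq] R_def)
  ultimately show ?thesis by blast
qed

section \<open>Injectivity of the coefficient map\<close>

lemma PiR_word4:
  assumes fQ: "finite Q" and uq: "uq_coeffs Q h t R"
  shows "PiR Q h R (h x, [(x, False), (a, True), (y, False), (b, True)]) = R x a y b"
proof -
  have "PiR Q h R (h x, [(x, False), (a, True), (y, False), (b, True)]) =
      (\<Sum>x'\<in>Q. \<Sum>a'\<in>Q. \<Sum>y'\<in>Q. \<Sum>b'\<in>Q. if x' = x \<and> a' = a \<and> y' = y \<and> b' = b then R x' a' y' b' else 0)"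
    unfolding PiR_def pvec_def by (intro sum.cong refl) auto
  also have "\<dots> = R x a y b" using sum_delta4[OF fQ] uq_coeffs_nonzero[OF uq, of x a y b] by auto
  finally show ?thesis .
qed

lemma PiR_starred_head: "PiR Q h R (v, (c, True) # ws) = 0"
  unfolding PiR_def pvec_def by simp

lemma cyclic_word4:
  assumes "closed_uq h t x a y b"
  shows "cyclic_word h t [(x, False), (a, True), (y, False), (b, True)]"
  unfolding cyclic_word_def
proof (intro allI impI)
  fix i assume "i < length [(x, False), (a, True), (y, False), (b, True)]"
  then have "i \<in> {0, 1, 2, 3}" by auto
  then show "dt h t ([(x, False), (a, True), (y, False), (b, True)] ! i) =
    dh h t ([(x, False), (a, True), (y, False), (b, True)] ! (Suc i mod length [(x, False), (a, True), (y, False), (b, True)]))"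
    using assms unfolding closed_uq_def by (auto simp: dt_def dh_def)
qed

lemma sum4: "(\<Sum>k<(4::nat). g k) = g 0 + g 1 + g 2 + (g 3 :: 'a::comm_monoid_add)"
  by (simp add: eval_nat_numeral)

lemma rotate_list4:
  "rotate 1 [p0, p1, p2, p3] = [p1, p2, p3, p0]"
  "rotate 2 [p0, p1, p2, p3] = [p2, p3, p0, p1]"
  "rotate 3 [p0, p1, p2, p3] = [p3, p0, p1, p2]"
  by (simp_all add: numeral_eq_Suc rotate1_def)

lemma graded_cyclic_signs_word4:
  "graded_cyclic_signs (\<lambda>k. if k < 2 then 1 else -1) [(x, False), (a, True), (y, False), (b, True)]"
  unfolding graded_cyclic_signs_def
proof (intro allI impI)
  fix k m :: nat
  assume "k < length [(x, False), (a, True), (y, False), (b, True)]"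
    and "m \<le> length [(x, False), (a, True), (y, False), (b, True)]"
  then have "k \<in> {0, 1, 2, 3}" "m \<in> {0, 1, 2, 3, 4}" by auto
  then show "(if k < 2 then 1 else -1 :: complex) =
    (-1) ^ (nstar (take m (rotate k [(x, False), (a, True), (y, False), (b, True)]))
          * nstar (drop m (rotate k [(x, False), (a, True), (y, False), (b, True)]))) *
    (if (k + m) mod length [(x, False), (a, True), (y, False), (b, True)] < 2 then 1 else -1)"
    by (auto simp: rotate_list4 nstar_def)
qed

lemma Vzero_PiR_diff_iff:
  assumes fQ: "finite Q" and uq: "uq_coeffs Q h t R" and uq': "uq_coeffs Q h t R'"
  shows "Vzero I Q h t (\<lambda>u. PiR Q h R u - PiR Q h R' u) \<longleftrightarrow> r_of Q h t R = r_of Q h t R'"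
proof
  assume eq: "r_of Q h t R = r_of Q h t R'"
  have "R x a y b = R' x a y b" for x a y b
    using fun_cong[OF eq, of "((x, a), (y, b))"] by (simp add: r_of_eq[OF fQ uq] r_of_eq[OF fQ uq'])
  then have "R = R'" by (intro ext)
  then show "Vzero I Q h t (\<lambda>u. PiR Q h R u - PiR Q h R' u)" using Vzero_zero by simp
next
  assume V: "Vzero I Q h t (\<lambda>u. PiR Q h R u - PiR Q h R' u)"
  have "R x a y b = R' x a y b" for x a y b
  proof (rule ccontr)
    assume ne: "R x a y b \<noteq> R' x a y b"
    then have "closed_uq h t x a y b"
      using uq_coeffs_nonzero[OF uq, of x a y b] uq_coeffs_nonzero[OF uq', of x a y b] by fastforce
    let ?w = "[(x, False), (a, True), (y, False), (b, True)]" and ?s = "\<lambda>k. if k < 2 then 1 else -1"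
    have "cyclic_trace h t ?s ?w (\<lambda>u. PiR Q h R u - PiR Q h R' u) = 0"
      by (rule cyclic_trace_Vzero[OF cyclic_word4 _ graded_cyclic_signs_word4 V]) (simp_all add: \<open>closed_uq h t x a y b\<close>)
    moreover have "cyclic_trace h t ?s ?w (\<lambda>u. PiR Q h R u - PiR Q h R' u) = 2 * (R x a y b - R' x a y b)"
      unfolding cyclic_trace_def
      by (simp add: sum4 rotate_list4 word_path_def dh_def PiR_starred_head
          PiR_word4[OF fQ uq] PiR_word4[OF fQ uq'] uq_coeffs_skew[OF uq, of y b x a]
          uq_coeffs_skew[OF uq', of y b x a])
    ultimately show False using ne by simp
  qed
  then show "r_of Q h t R = r_of Q h t R'" by (simp add: r_of_eq[OF fQ uq] r_of_eq[OF fQ uq'])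
qed

section \<open>The bracket of a uniform quadratic element with itself\<close>

lemma supp_sum_pvec: "supp (\<lambda>u. \<Sum>i\<in>F. c i * pvec (\<pi> i) u) \<subseteq> \<pi> ` F"
proof
  fix p assume p: "p \<in> supp (\<lambda>u. \<Sum>i\<in>F. c i * pvec (\<pi> i) u)"
  show "p \<in> \<pi> ` F"
  proof (rule ccontr)
    assume "p \<notin> \<pi> ` F"
    then have "(\<Sum>i\<in>F. c i * pvec (\<pi> i) p) = 0" unfolding pvec_def by (intro sum.neutral) auto
    with p show False unfolding supp_def by simp
  qed
qed

lemma sum_image_sum_pvec:
  assumes "finite F"
  shows "(\<Sum>p\<in>\<pi> ` F. (\<Sum>i\<in>F. c i * pvec (\<pi> i) p) * H p) = (\<Sum>i\<in>F. c i * H (\<pi> i) :: complex)"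
proof -
  have "(\<Sum>p\<in>\<pi> ` F. (\<Sum>i\<in>F. c i * pvec (\<pi> i) p) * H p) = (\<Sum>i\<in>F. \<Sum>p\<in>\<pi> ` F. c i * (pvec (\<pi> i) p * H p))"
    unfolding sum_distrib_right by (subst sum.swap) (simp add: mult.assoc)
  also have "\<dots> = (\<Sum>i\<in>F. \<Sum>p\<in>\<pi> ` F. if p = \<pi> i then c i * H p else 0)"
    unfolding pvec_def by (intro sum.cong refl) auto
  also have "\<dots> = (\<Sum>i\<in>F. c i * H (\<pi> i))" using assms by (simp add: sum.delta)
  finally show ?thesis .
qed

lemma Dop_sum_pvec:
  assumes "finite F"
  shows "Dop I Q h t w (\<lambda>u. \<Sum>i\<in>F. c i * pvec (\<pi> i) u) u = (\<Sum>i\<in>F. c i * Dpath I Q h t w (\<pi> i) u)"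
proof -
  let ?f = "\<lambda>u. \<Sum>i\<in>F. c i * pvec (\<pi> i) u"
  have "Dop I Q h t w ?f u = (\<Sum>p\<in>\<pi> ` F. ?f p * Dpath I Q h t w p u)"
    unfolding Dop_def
    by (rule sum.mono_neutral_left) (auto simp: assms supp_sum_pvec, auto simp: supp_def)
  also have "\<dots> = (\<Sum>i\<in>F. c i * Dpath I Q h t w (\<pi> i) u)" by (rule sum_image_sum_pvec[OF assms])
  finally show ?thesis .
qed

lemma pmul_sum_pvec:
  assumes fF: "finite F" and fG: "finite G"
  shows "pmul h t (\<lambda>u. \<Sum>i\<in>F. c i * pvec (\<pi> i) u) (\<lambda>u. \<Sum>j\<in>G. d j * pvec (\<rho> j) u) u =
     (\<Sum>i\<in>F. \<Sum>j\<in>G. c i * d j * pmul h t (pvec (\<pi> i)) (pvec (\<rho> j)) u)"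
proof -
  let ?f = "\<lambda>u. \<Sum>i\<in>F. c i * pvec (\<pi> i) u" and ?g = "\<lambda>u. \<Sum>j\<in>G. d j * pvec (\<rho> j) u"
  let ?K = "\<lambda>p q. pmul h t (pvec p) (pvec q) u"
  have "pmul h t ?f ?g u = (\<Sum>p\<in>supp ?f. \<Sum>q\<in>supp ?g. ?f p * (?g q * ?K p q))"
    unfolding pmul_eq_sum_pmul_pvec[of h t ?f ?g] by (simp add: mult.assoc)
  also have "\<dots> = (\<Sum>p\<in>\<pi> ` F. \<Sum>q\<in>supp ?g. ?f p * (?g q * ?K p q))"
    by (rule sum.mono_neutral_left) (auto simp: fF supp_sum_pvec, auto simp: supp_def)
  also have "\<dots> = (\<Sum>p\<in>\<pi> ` F. \<Sum>q\<in>\<rho> ` G. ?f p * (?g q * ?K p q))"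
    by (intro sum.cong refl sum.mono_neutral_left) (auto simp: fG supp_sum_pvec, auto simp: supp_def)
  also have "\<dots> = (\<Sum>p\<in>\<pi> ` F. ?f p * (\<Sum>q\<in>\<rho> ` G. ?g q * ?K p q))"
    by (simp add: sum_distrib_left)
  also have "\<dots> = (\<Sum>i\<in>F. c i * (\<Sum>j\<in>G. d j * ?K (\<pi> i) (\<rho> j)))"
    by (simp add: sum_image_sum_pvec fF fG)
  also have "\<dots> = (\<Sum>i\<in>F. \<Sum>j\<in>G. c i * d j * ?K (\<pi> i) (\<rho> j))"
    by (simp add: sum_distrib_left mult_ac)
  finally show ?thesis .
qed

lemma PiR_eq_sum_pvec:
  "PiR Q h R = (\<lambda>u. \<Sum>i\<in>Q \<times> Q \<times> Q \<times> Q. (\<lambda>(x, a, y, b). R x a y b) i *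
     pvec ((\<lambda>(x, a, y, b). (h x, [(x, False), (a, True), (y, False), (b, True)])) i) u)"
  unfolding PiR_def by (simp add: sum.cartesian_product) (intro ext sum.cong refl, auto split: prod.split)

lemma Dpath_word4_starred:
  "Dpath I Q h t (a, True) (v, [(x, False), (a', True), (y, False), (b, True)]) u =
    (if a' = a then - word_elt I Q h t [(y, False), (b, True), (x, False)] u else 0) +
    (if b = a then word_elt I Q h t [(x, False), (a', True), (y, False)] u else 0)"
  by (simp add: Dpath_def numeral_eq_Suc lessThan_Suc nstar_def)

lemma Dpath_word4_unstarred:
  "Dpath I Q h t (a, False) (v, [(x, False), (a', True), (y, False), (b, True)]) u =
    (if x = a then word_elt I Q h t [(a', True), (y, False), (b, True)] u else 0) +
    (if y = a then - word_elt I Q h t [(b, True), (x, False), (a', True)] u else 0)"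
  by (simp add: Dpath_def numeral_eq_Suc lessThan_Suc nstar_def)

lemma Dop_PiR:
  "finite Q \<Longrightarrow> Dop I Q h t w (PiR Q h R) u = (\<Sum>x\<in>Q. \<Sum>a\<in>Q. \<Sum>y\<in>Q. \<Sum>b\<in>Q.
     R x a y b * Dpath I Q h t w (h x, [(x, False), (a, True), (y, False), (b, True)]) u)"
  unfolding PiR_eq_sum_pvec
  by (simp add: Dop_sum_pvec sum.cartesian_product) (intro sum.cong refl, auto split: prod.split)

lemma times_if_zero: "f * (if c then g else 0) = (if c then f * g else (0::'a::mult_zero))"
  by simp

text \<open>The two occurrences of a* in the words of Pi contribute equally, by skew-symmetry of R.\<close>
lemma Dop_starred_PiR_words:
  assumes fQ: "finite Q" and uq: "uq_coeffs Q h t R" and aQ: "a \<in> Q"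
  shows "Dop I Q h t (a, True) (PiR Q h R) u =
    2 * (\<Sum>x\<in>Q. \<Sum>a'\<in>Q. \<Sum>y\<in>Q. R x a' y a * word_elt I Q h t [(x, False), (a', True), (y, False)] u)"
proof -
  let ?W = "\<lambda>x a' y. word_elt I Q h t [(x, False), (a', True), (y, False)] u"
  let ?S1 = "\<Sum>x\<in>Q. \<Sum>a'\<in>Q. \<Sum>y\<in>Q. \<Sum>b\<in>Q. R x a' y b * (if a' = a then - ?W y b x else 0)"
  let ?S2 = "\<Sum>x\<in>Q. \<Sum>a'\<in>Q. \<Sum>y\<in>Q. \<Sum>b\<in>Q. R x a' y b * (if b = a then ?W x a' y else 0)"
  have "Dop I Q h t (a, True) (PiR Q h R) u = ?S1 + ?S2"
    unfolding Dop_PiR[OF fQ] Dpath_word4_starred by (simp add: distrib_left sum.distrib)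
  also have "?S2 = (\<Sum>x\<in>Q. \<Sum>a'\<in>Q. \<Sum>y\<in>Q. R x a' y a * ?W x a' y)"
    using aQ fQ by (simp add: times_if_zero sum_if_const sum.delta sum.delta' cong: if_cong)
  also have "?S1 = (\<Sum>x\<in>Q. \<Sum>y\<in>Q. \<Sum>b\<in>Q. R y b x a * ?W y b x)"
    using aQ fQ by (simp add: times_if_zero sum_if_const sum.delta sum.delta' uq_coeffs_skew[OF uq, of _ a]
        cong: if_cong)
  also have "\<dots> = (\<Sum>y\<in>Q. \<Sum>b\<in>Q. \<Sum>x\<in>Q. R y b x a * ?W y b x)"
    by (subst sum.swap) (intro sum.cong refl sum.swap)
  finally show ?thesis by simp
qed

lemma Dop_unstarred_PiR_words:
  assumes fQ: "finite Q" and uq: "uq_coeffs Q h t R" and aQ: "a \<in> Q"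
  shows "Dop I Q h t (a, False) (PiR Q h R) u =
    2 * (\<Sum>a'\<in>Q. \<Sum>y\<in>Q. \<Sum>b\<in>Q. R a a' y b * word_elt I Q h t [(a', True), (y, False), (b, True)] u)"
proof -
  let ?W = "\<lambda>a' y b. word_elt I Q h t [(a', True), (y, False), (b, True)] u"
  let ?S1 = "\<Sum>x\<in>Q. \<Sum>a'\<in>Q. \<Sum>y\<in>Q. \<Sum>b\<in>Q. R x a' y b * (if x = a then ?W a' y b else 0)"
  let ?S2 = "\<Sum>x\<in>Q. \<Sum>a'\<in>Q. \<Sum>y\<in>Q. \<Sum>b\<in>Q. R x a' y b * (if y = a then - ?W b x a' else 0)"
  have "Dop I Q h t (a, False) (PiR Q h R) u = ?S1 + ?S2"
    unfolding Dop_PiR[OF fQ] Dpath_word4_unstarred by (simp add: distrib_left sum.distrib)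
  also have "?S1 = (\<Sum>a'\<in>Q. \<Sum>y\<in>Q. \<Sum>b\<in>Q. R a a' y b * ?W a' y b)"
    using aQ fQ by (simp add: times_if_zero sum_if_const sum.delta sum.delta' cong: if_cong)
  also have "?S2 = (\<Sum>x\<in>Q. \<Sum>a'\<in>Q. \<Sum>b\<in>Q. R a b x a' * ?W b x a')"
    using aQ fQ by (simp add: times_if_zero sum_if_const sum.delta sum.delta' uq_coeffs_skew[OF uq, of _ _ a]
        cong: if_cong)
  also have "\<dots> = (\<Sum>b\<in>Q. \<Sum>x\<in>Q. \<Sum>a'\<in>Q. R a b x a' * ?W b x a')"
    by (subst sum.swap) (intro sum.cong refl sum.swap)
  finally show ?thesis by simp
qed

lemma chain_Cons_Cons:
  "(\<forall>k. Suc k < length (a # b # ws) \<longrightarrow> f ((a # b # ws) ! k) = g ((a # b # ws) ! Suc k)) \<longleftrightarrow>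
   f a = g b \<and> (\<forall>k. Suc k < length (b # ws) \<longrightarrow> f ((b # ws) ! k) = g ((b # ws) ! Suc k))"
  by (simp add: All_less_Suc2)

lemma valid_path_word3_unstarred:
  assumes "t x = t a" "h a = h y" "x \<in> Q" "a \<in> Q" "y \<in> Q" "h ` Q \<subseteq> I"
  shows "valid_path I Q h t (h x, [(x, False), (a, True), (y, False)])"
  unfolding valid_path_def using assms by (simp only: snd_conv fst_conv chain_Cons_Cons) (auto simp: dh_def dt_def)

lemma valid_path_word3_starred:
  assumes "h a = h y" "t y = t b" "a \<in> Q" "y \<in> Q" "b \<in> Q" "t ` Q \<subseteq> I"
  shows "valid_path I Q h t (t a, [(a, True), (y, False), (b, True)])"
  unfolding valid_path_def using assms by (simp only: snd_conv fst_conv chain_Cons_Cons) (auto simp: dh_def dt_def)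

lemma word_elt_eq_pvec:
  "ys \<noteq> [] \<Longrightarrow> valid_path I Q h t (dh h t (hd ys), ys) \<Longrightarrow> word_elt I Q h t ys = pvec (dh h t (hd ys), ys)"
  unfolding word_elt_def by simp

lemma Dop_starred_PiR:
  assumes fQ: "finite Q" and uq: "uq_coeffs Q h t R" and aQ: "a \<in> Q" and hI: "h ` Q \<subseteq> I"
  shows "Dop I Q h t (a, True) (PiR Q h R) = (\<lambda>u. \<Sum>i\<in>Q \<times> Q \<times> Q. (\<lambda>(x, a', y). 2 * R x a' y a) i *
     pvec ((\<lambda>(x, a', y). (h x, [(x, False), (a', True), (y, False)])) i) u)"
proof
  fix u
  have word_eq: "R x a' y a * word_elt I Q h t [(x, False), (a', True), (y, False)] u =
      R x a' y a * pvec (h x, [(x, False), (a', True), (y, False)]) u" for x a' y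
  proof (cases "R x a' y a = 0")
    case False
    then have "valid_path I Q h t (h x, [(x, False), (a', True), (y, False)])"
      using uq_coeffs_nonzero[OF uq] hI by (intro valid_path_word3_unstarred) (auto simp: closed_uq_def)
    then show ?thesis by (simp add: word_elt_eq_pvec dh_def)
  qed simp
  then show "Dop I Q h t (a, True) (PiR Q h R) u = (\<Sum>i\<in>Q \<times> Q \<times> Q. (\<lambda>(x, a', y). 2 * R x a' y a) i *
     pvec ((\<lambda>(x, a', y). (h x, [(x, False), (a', True), (y, False)])) i) u)"
    unfolding Dop_starred_PiR_words[OF fQ uq aQ] sum_distrib_left sum.cartesian_product
    by (intro sum.cong refl) (clarsimp simp: word_eq mult.assoc)
qed

lemma Dop_unstarred_PiR:
  assumes fQ: "finite Q" and uq: "uq_coeffs Q h t R" and aQ: "a \<in> Q" and tI: "t ` Q \<subseteq> I"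
  shows "Dop I Q h t (a, False) (PiR Q h R) = (\<lambda>u. \<Sum>j\<in>Q \<times> Q \<times> Q. (\<lambda>(a', y, b). 2 * R a a' y b) j *
     pvec ((\<lambda>(a', y, b). (t a', [(a', True), (y, False), (b, True)])) j) u)"
proof
  fix u
  have word_eq: "R a a' y b * word_elt I Q h t [(a', True), (y, False), (b, True)] u =
      R a a' y b * pvec (t a', [(a', True), (y, False), (b, True)]) u" for a' y b
  proof (cases "R a a' y b = 0")
    case False
    then have "valid_path I Q h t (t a', [(a', True), (y, False), (b, True)])"
      using uq_coeffs_nonzero[OF uq] tI by (intro valid_path_word3_starred) (auto simp: closed_uq_def)
    then show ?thesis by (simp add: word_elt_eq_pvec dh_def)
  qed simp
  then show "Dop I Q h t (a, False) (PiR Q h R) u = (\<Sum>j\<in>Q \<times> Q \<times> Q. (\<lambda>(a', y, b). 2 * R a a' y b) j *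
     pvec ((\<lambda>(a', y, b). (t a', [(a', True), (y, False), (b, True)])) j) u)"
    unfolding Dop_unstarred_PiR_words[OF fQ uq aQ] sum_distrib_left sum.cartesian_product
    by (intro sum.cong refl) (clarsimp simp: word_eq mult.assoc)
qed

definition hexpath :: "('e \<Rightarrow> 'v) \<Rightarrow> ('e \<times> 'e \<times> 'e) \<times> ('e \<times> 'e \<times> 'e) \<Rightarrow> ('v, 'e) path" where
  "hexpath h = (\<lambda>((x, a, y), (d, z, e)).
     (h x, [(x, False), (a, True), (y, False), (d, True), (z, False), (e, True)]))"

text \<open>The coefficient of x a* \<otimes> y d* \<otimes> z e* in r12 r23, and of x a* y d* z e* in [Pi,Pi] up to the factor 8.\<close>
definition aybe_coeff :: "'e set \<Rightarrow> ('e \<Rightarrow> 'e \<Rightarrow> 'e \<Rightarrow> 'e \<Rightarrow> complex) \<Rightarrow>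
    ('e \<times> 'e \<times> 'e) \<times> ('e \<times> 'e \<times> 'e) \<Rightarrow> complex" where
  "aybe_coeff Q R = (\<lambda>((x, a, y), (d, z, e)). \<Sum>c\<in>Q. R x a y c * R c d z e)"

lemma vbracket_PiR:
  assumes fQ: "finite Q" and uq: "uq_coeffs Q h t R" and hI: "h ` Q \<subseteq> I" and tI: "t ` Q \<subseteq> I"
  shows "vbracket I Q h t 2 2 (PiR Q h R) (PiR Q h R) =
     (\<lambda>u. \<Sum>T\<in>(Q \<times> Q \<times> Q) \<times> (Q \<times> Q \<times> Q). 8 * aybe_coeff Q R T * pvec (hexpath h T) u)"
proof
  fix u
  let ?Q3 = "Q \<times> Q \<times> Q"
  define F where "F a i j = (\<lambda>((x, a', y), (a'', z, e)). R x a' y a * R a a'' z e) (i, j) * pvec (hexpath h (i, j)) u"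
    for a i j
  have f3: "finite ?Q3" using fQ by simp
  have product: "(\<lambda>(x, a', y). 2 * R x a' y a) i * (\<lambda>(a', y, b). 2 * R a a' y b) j *
      pmul h t (pvec ((\<lambda>(x, a', y). (h x, [(x, False), (a', True), (y, False)])) i))
        (pvec ((\<lambda>(a', y, b). (t a', [(a', True), (y, False), (b, True)])) j)) u = 4 * F a i j" for a i j
  proof -
    obtain x a' y a'' z e where ij: "i = (x, a', y)" "j = (a'', z, e)" by (metis prod.collapse)
    have "R x a' y a \<noteq> 0 \<Longrightarrow> R a a'' z e \<noteq> 0 \<Longrightarrow> t y = t a''"
      using uq_coeffs_nonzero[OF uq] unfolding closed_uq_def by metis
    then show ?thesis unfolding ij pmul_pvec by (auto simp: F_def ptail_def dt_def hexpath_def pvec_def)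
  qed
  have pm: "pmul h t (Dop I Q h t (a, True) (PiR Q h R)) (Dop I Q h t (a, False) (PiR Q h R)) u =
      (\<Sum>i\<in>?Q3. \<Sum>j\<in>?Q3. 4 * F a i j)" if aQ: "a \<in> Q" for a
    unfolding Dop_starred_PiR[OF fQ uq aQ hI] Dop_unstarred_PiR[OF fQ uq aQ tI] pmul_sum_pvec[OF f3 f3]
    by (intro sum.cong refl) (rule product)
  have "vbracket I Q h t 2 2 (PiR Q h R) (PiR Q h R) u =
      (\<Sum>a\<in>Q. 2 * pmul h t (Dop I Q h t (a, True) (PiR Q h R)) (Dop I Q h t (a, False) (PiR Q h R)) u)"
    unfolding vbracket_def by simp
  also have "\<dots> = (\<Sum>a\<in>Q. \<Sum>i\<in>?Q3. \<Sum>j\<in>?Q3. 8 * F a i j)"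
    by (intro sum.cong refl) (simp add: pm sum_distrib_left)
  also have "\<dots> = (\<Sum>i\<in>?Q3. \<Sum>j\<in>?Q3. \<Sum>a\<in>Q. 8 * F a i j)"
    by (subst sum.swap) (intro sum.cong refl sum.swap)
  also have "\<dots> = (\<Sum>i\<in>?Q3. \<Sum>j\<in>?Q3. 8 * aybe_coeff Q R (i, j) * pvec (hexpath h (i, j)) u)"
    by (intro sum.cong refl)
      (auto simp: F_def aybe_coeff_def sum_distrib_left sum_distrib_right mult_ac split: prod.split)
  also have "\<dots> = (\<Sum>T\<in>?Q3 \<times> ?Q3. 8 * aybe_coeff Q R T * pvec (hexpath h T) u)"
    by (simp add: sum.cartesian_product)
  finally show "vbracket I Q h t 2 2 (PiR Q h R) (PiR Q h R) u =
      (\<Sum>T\<in>?Q3 \<times> ?Q3. 8 * aybe_coeff Q R T * pvec (hexpath h T) u)" .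
qed

section \<open>The associative Yang-Baxter equation in coordinates\<close>

definition rot_hex :: "('e \<times> 'e \<times> 'e) \<times> ('e \<times> 'e \<times> 'e) \<Rightarrow> ('e \<times> 'e \<times> 'e) \<times> ('e \<times> 'e \<times> 'e)" where
  "rot_hex = (\<lambda>((x, a, y), (d, z, e)). ((y, d, z), (e, x, a)))"

definition closed_hex :: "('e \<Rightarrow> 'v) \<Rightarrow> ('e \<Rightarrow> 'v) \<Rightarrow> ('e \<times> 'e \<times> 'e) \<times> ('e \<times> 'e \<times> 'e) \<Rightarrow> bool" where
  "closed_hex h t = (\<lambda>((x, a, y), (d, z, e)).
     t x = t a \<and> h a = h y \<and> t y = t d \<and> h d = h z \<and> t z = t e \<and> h e = h x)"

lemma rot_hex_rot_hex_rot_hex [simp]: "rot_hex (rot_hex (rot_hex T)) = T"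
  unfolding rot_hex_def by (auto split: prod.split)

lemma rot_hex_mem: "T \<in> (Q \<times> Q \<times> Q) \<times> (Q \<times> Q \<times> Q) \<Longrightarrow> rot_hex T \<in> (Q \<times> Q \<times> Q) \<times> (Q \<times> Q \<times> Q)"
  unfolding rot_hex_def by (auto split: prod.split)

lemma closed_hex_rot_hex: "closed_hex h t T \<Longrightarrow> closed_hex h t (rot_hex T)"
  unfolding rot_hex_def closed_hex_def by (auto split: prod.split)

lemma aybe_coeff_nonzero:
  assumes uq: "uq_coeffs Q h t R" and nz: "aybe_coeff Q R T \<noteq> 0"
  shows "T \<in> (Q \<times> Q \<times> Q) \<times> (Q \<times> Q \<times> Q) \<and> closed_hex h t T"
proof -
  obtain x a y d z e where T: "T = ((x, a, y), (d, z, e))" by (metis prod.collapse)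
  have "(\<Sum>c\<in>Q. R x a y c * R c d z e) \<noteq> 0" using nz unfolding T aybe_coeff_def by simp
  then obtain c where "R x a y c * R c d z e \<noteq> 0" by (rule sum.not_neutral_contains_not_neutral)
  then show ?thesis using uq_coeffs_nonzero[OF uq, of x a y c] uq_coeffs_nonzero[OF uq, of c d z e]
    unfolding T closed_hex_def closed_uq_def by auto
qed

lemma aybe_coeff_orbit_nonzero:
  assumes uq: "uq_coeffs Q h t R"
    and nz: "aybe_coeff Q R T \<noteq> 0 \<or> aybe_coeff Q R (rot_hex T) \<noteq> 0 \<or> aybe_coeff Q R (rot_hex (rot_hex T)) \<noteq> 0"
  shows "T \<in> (Q \<times> Q \<times> Q) \<times> (Q \<times> Q \<times> Q) \<and> closed_hex h t T"
  using nz
proof (elim disjE)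
  assume "aybe_coeff Q R (rot_hex T) \<noteq> 0"
  then show ?thesis
    using aybe_coeff_nonzero[OF uq] rot_hex_mem closed_hex_rot_hex rot_hex_rot_hex_rot_hex by metis
next
  assume "aybe_coeff Q R (rot_hex (rot_hex T)) \<noteq> 0"
  then show ?thesis
    using aybe_coeff_nonzero[OF uq] rot_hex_mem closed_hex_rot_hex rot_hex_rot_hex_rot_hex by metis
qed (use aybe_coeff_nonzero[OF uq] in blast)

lemma sum_abasis:
  assumes "finite Q" and "\<And>u. u \<notin> abasis Q t \<Longrightarrow> f u = 0"
  shows "(\<Sum>u\<in>abasis Q t. f u) = (\<Sum>x\<in>Q. \<Sum>a\<in>Q. f (x, a) :: complex)"
proof -
  have "(\<Sum>u\<in>abasis Q t. f u) = (\<Sum>u\<in>Q \<times> Q. f u)"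
    by (rule sum.mono_neutral_left) (use assms in \<open>auto simp: abasis_def\<close>)
  then show ?thesis by (simp add: sum.cartesian_product)
qed

lemma sum_abasis4:
  assumes fQ: "finite Q"
    and G: "\<And>u v u' v'. G u v u' v' \<noteq> 0 \<Longrightarrow> u \<in> abasis Q t \<and> v \<in> abasis Q t \<and> u' \<in> abasis Q t \<and> v' \<in> abasis Q t"
  shows "(\<Sum>u\<in>abasis Q t. \<Sum>v\<in>abasis Q t. \<Sum>u'\<in>abasis Q t. \<Sum>v'\<in>abasis Q t. G u v u' v') =
    (\<Sum>u1\<in>Q. \<Sum>u2\<in>Q. \<Sum>v1\<in>Q. \<Sum>v2\<in>Q. \<Sum>u1'\<in>Q. \<Sum>u2'\<in>Q. \<Sum>v1'\<in>Q. \<Sum>v2'\<in>Q.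
       G (u1, u2) (v1, v2) (u1', u2') (v1', v2') :: complex)"
proof -
  have "(\<Sum>v'\<in>abasis Q t. G u v u' v') = (\<Sum>v1'\<in>Q. \<Sum>v2'\<in>Q. G u v u' (v1', v2'))" for u v u'
    by (rule sum_abasis[OF fQ]) (use G in blast)
  moreover have "(\<Sum>u'\<in>abasis Q t. \<Sum>v1'\<in>Q. \<Sum>v2'\<in>Q. G u v u' (v1', v2')) =
      (\<Sum>u1'\<in>Q. \<Sum>u2'\<in>Q. \<Sum>v1'\<in>Q. \<Sum>v2'\<in>Q. G u v (u1', u2') (v1', v2'))" for u v
    by (rule sum_abasis[OF fQ]) (intro sum.neutral ballI; metis G)
  moreover have "(\<Sum>v\<in>abasis Q t. \<Sum>u1'\<in>Q. \<Sum>u2'\<in>Q. \<Sum>v1'\<in>Q. \<Sum>v2'\<in>Q. G u v (u1', u2') (v1', v2')) =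
      (\<Sum>v1\<in>Q. \<Sum>v2\<in>Q. \<Sum>u1'\<in>Q. \<Sum>u2'\<in>Q. \<Sum>v1'\<in>Q. \<Sum>v2'\<in>Q. G u (v1, v2) (u1', u2') (v1', v2'))" for u
    by (rule sum_abasis[OF fQ]) (intro sum.neutral ballI; metis G)
  moreover have "(\<Sum>u\<in>abasis Q t. \<Sum>v1\<in>Q. \<Sum>v2\<in>Q. \<Sum>u1'\<in>Q. \<Sum>u2'\<in>Q. \<Sum>v1'\<in>Q. \<Sum>v2'\<in>Q.
        G u (v1, v2) (u1', u2') (v1', v2')) =
      (\<Sum>u1\<in>Q. \<Sum>u2\<in>Q. \<Sum>v1\<in>Q. \<Sum>v2\<in>Q. \<Sum>u1'\<in>Q. \<Sum>u2'\<in>Q. \<Sum>v1'\<in>Q. \<Sum>v2'\<in>Q.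
        G (u1, u2) (v1, v2) (u1', u2') (v1', v2'))"
    by (rule sum_abasis[OF fQ]) (intro sum.neutral ballI; metis G)
  ultimately show ?thesis by simp
qed

lemma uq_coeffs_nonzero_abasis:
  "uq_coeffs Q h t R \<Longrightarrow> R x a y b \<noteq> 0 \<Longrightarrow> (x, a) \<in> abasis Q t \<and> (y, b) \<in> abasis Q t"
  using uq_coeffs_nonzero[of Q h t R x a y b] unfolding abasis_def closed_uq_def by auto

lemma sum_r_of_abasis4:
  assumes fQ: "finite Q" and uq: "uq_coeffs Q h t R"
  shows "(\<Sum>u\<in>abasis Q t. \<Sum>v\<in>abasis Q t. \<Sum>u'\<in>abasis Q t. \<Sum>v'\<in>abasis Q t.
      r_of Q h t R (u, v) * r_of Q h t R (u', v') * K u v u' v') =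
    (\<Sum>u1\<in>Q. \<Sum>u2\<in>Q. \<Sum>v1\<in>Q. \<Sum>v2\<in>Q. \<Sum>u1'\<in>Q. \<Sum>u2'\<in>Q. \<Sum>v1'\<in>Q. \<Sum>v2'\<in>Q.
      R u1 u2 v1 v2 * R u1' u2' v1' v2' * K (u1, u2) (v1, v2) (u1', u2') (v1', v2'))"
  by (subst sum_abasis4[OF fQ]) (auto simp: r_of_eq[OF fQ uq] split: prod.splits dest: uq_coeffs_nonzero_abasis[OF uq])

text \<open>Nonzero coefficients only pair admissible basis elements, so the admissibility conditions
  hidden in basis3 reduce to index equalities.\<close>
lemma r12r23_r_of:
  assumes fQ: "finite Q" and uq: "uq_coeffs Q h t R"
  shows "r12r23 Q h t (r_of Q h t R) ((x, a), (y, d), (z, e)) = aybe_coeff Q R ((x, a, y), (d, z, e))"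
proof -
  have "R u1 u2 v1 v2 * R u1' u2' v1' v2' * (if amul_ok (v1, v2) (u1', u2')
        then basis3 Q h t (u1, u2) (amul (v1, v2) (u1', u2')) (v1', v2') ((x, a), (y, d), (z, e)) else 0) =
      (if u1 = x then if u2 = a then if v1 = y then if u1' = v2 then if u2' = d then if v1' = z then
         if v2' = e then R x a y v2 * R v2 d z e else 0 else 0 else 0 else 0 else 0 else 0 else 0)"
    for u1 u2 v1 v2 u1' u2' v1' v2'
    using uq_coeffs_nonzero[OF uq, of u1 u2 v1 v2] uq_coeffs_nonzero[OF uq, of u1' u2' v1' v2']
    unfolding basis3_def amul_ok_def amul_def adm2_def abasis_def closed_uq_def
    by (cases "R u1 u2 v1 v2 = 0 \<or> R u1' u2' v1' v2' = 0") auto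
  then show ?thesis
    unfolding r12r23_def sum_r_of_abasis4[OF fQ uq]
    using fQ uq_coeffs_nonzero[OF uq]
    by (simp add: sum_if_const sum.delta sum.delta' aybe_coeff_def cong: if_cong)
      (auto intro!: sum.neutral sum.cong simp: mult.commute; metis)
qed

lemma r31r12_r_of:
  assumes fQ: "finite Q" and uq: "uq_coeffs Q h t R"
  shows "r31r12 Q h t (r_of Q h t R) ((x, a), (y, d), (z, e)) = aybe_coeff Q R ((z, e, x), (a, y, d))"
proof -
  have "R u1 u2 v1 v2 * R u1' u2' v1' v2' * (if amul_ok (v1', v2') (u1, u2)
        then basis3 Q h t (amul (v1', v2') (u1, u2)) (v1, v2) (u1', u2') ((x, a), (y, d), (z, e)) else 0) =
      (if u2 = a then if v1 = y then if v2 = d then if u1' = z then if u2' = e then if v1' = x then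
         if v2' = u1 then R u1 a y d * R z e x u1 else 0 else 0 else 0 else 0 else 0 else 0 else 0)"
    for u1 u2 v1 v2 u1' u2' v1' v2'
    using uq_coeffs_nonzero[OF uq, of u1 u2 v1 v2] uq_coeffs_nonzero[OF uq, of u1' u2' v1' v2']
    unfolding basis3_def amul_ok_def amul_def adm2_def abasis_def closed_uq_def
    by (cases "R u1 u2 v1 v2 = 0 \<or> R u1' u2' v1' v2' = 0") auto
  then show ?thesis
    unfolding r31r12_def sum_r_of_abasis4[OF fQ uq]
    using fQ uq_coeffs_nonzero[OF uq]
    by (simp add: sum_if_const sum.delta sum.delta' aybe_coeff_def cong: if_cong)
      (auto intro!: sum.neutral sum.cong simp: mult.commute; metis)
qed

lemma r23r31_r_of:
  assumes fQ: "finite Q" and uq: "uq_coeffs Q h t R"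
  shows "r23r31 Q h t (r_of Q h t R) ((x, a), (y, d), (z, e)) = aybe_coeff Q R ((y, d, z), (e, x, a))"
proof -
  have "R u1 u2 v1 v2 * R u1' u2' v1' v2' * (if amul_ok (v1, v2) (u1', u2')
        then basis3 Q h t (v1', v2') (u1, u2) (amul (v1, v2) (u1', u2')) ((x, a), (y, d), (z, e)) else 0) =
      (if u1 = y then if u2 = d then if v1 = z then if u1' = v2 then if u2' = e then if v1' = x then
         if v2' = a then R y d z v2 * R v2 e x a else 0 else 0 else 0 else 0 else 0 else 0 else 0)"
    for u1 u2 v1 v2 u1' u2' v1' v2'
    using uq_coeffs_nonzero[OF uq, of u1 u2 v1 v2] uq_coeffs_nonzero[OF uq, of u1' u2' v1' v2']
    unfolding basis3_def amul_ok_def amul_def adm2_def abasis_def closed_uq_def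
    by (cases "R u1 u2 v1 v2 = 0 \<or> R u1' u2' v1' v2' = 0") auto
  then show ?thesis
    unfolding r23r31_def sum_r_of_abasis4[OF fQ uq]
    using fQ uq_coeffs_nonzero[OF uq]
    by (simp add: sum_if_const sum.delta sum.delta' aybe_coeff_def cong: if_cong)
      (auto intro!: sum.neutral sum.cong simp: mult.commute; metis)
qed

lemma AYBE_r_of_iff:
  assumes fQ: "finite Q" and uq: "uq_coeffs Q h t R"
  shows "AYBE Q h t (r_of Q h t R) \<longleftrightarrow>
    (\<forall>T. aybe_coeff Q R T + aybe_coeff Q R (rot_hex T) + aybe_coeff Q R (rot_hex (rot_hex T)) = 0)"
proof -
  have "r12r23 Q h t (r_of Q h t R) ((x, a), (y, d), (z, e)) + r31r12 Q h t (r_of Q h t R) ((x, a), (y, d), (z, e))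
      + r23r31 Q h t (r_of Q h t R) ((x, a), (y, d), (z, e)) =
    aybe_coeff Q R T + aybe_coeff Q R (rot_hex T) + aybe_coeff Q R (rot_hex (rot_hex T))"
    if "T = ((x, a, y), (d, z, e))" for T x a y d z e
    unfolding that r12r23_r_of[OF fQ uq] r31r12_r_of[OF fQ uq] r23r31_r_of[OF fQ uq] rot_hex_def
    by (simp add: algebra_simps)
  then show ?thesis unfolding AYBE_def by (metis prod.collapse)
qed

section \<open>Vanishing of the bracket\<close>

lemma sum_orbit_balanced:
  fixes B W :: "'a \<Rightarrow> complex"
  assumes fA: "finite A" and \<sigma>A: "\<And>T. T \<in> A \<Longrightarrow> \<sigma> T \<in> A" and \<sigma>3: "\<And>T. \<sigma> (\<sigma> (\<sigma> T)) = T"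
    and balanced: "\<And>T. T \<in> A \<Longrightarrow> B T + B (\<sigma> T) + B (\<sigma> (\<sigma> T)) = 0"
  shows "3 * (\<Sum>T\<in>A. B T * W T) = (\<Sum>T\<in>A. B T * ((W T - W (\<sigma> T)) + (W T - W (\<sigma> (\<sigma> T)))))"
proof -
  have inj: "inj_on \<sigma> A" by (metis inj_onI \<sigma>3)
  moreover have "\<sigma> ` A \<subseteq> A" using \<sigma>A by auto
  ultimately have "\<sigma> ` A = A" by (rule endo_inj_surj[OF fA, rotated])
  then have reindex: "(\<Sum>T\<in>A. g (\<sigma> T)) = (\<Sum>T\<in>A. g T :: complex)" for g
    using sum.reindex[OF inj, of g] by simp
  have e1: "(\<Sum>T\<in>A. B T * W (\<sigma> T)) = (\<Sum>T\<in>A. B (\<sigma> (\<sigma> T)) * W T)"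
    using reindex[of "\<lambda>T. B (\<sigma> (\<sigma> T)) * W T"] by (simp add: \<sigma>3)
  have e2: "(\<Sum>T\<in>A. B T * W (\<sigma> (\<sigma> T))) = (\<Sum>T\<in>A. B (\<sigma> T) * W T)"
    using reindex[of "\<lambda>T. B (\<sigma> T) * W T"] reindex[of "\<lambda>T. B (\<sigma> (\<sigma> T)) * W (\<sigma> T)"]
    by (simp add: \<sigma>3)
  have "(\<Sum>T\<in>A. (B T + B (\<sigma> T) + B (\<sigma> (\<sigma> T))) * W T) = 0"
    using balanced by (intro sum.neutral) simp
  then have zero: "(\<Sum>T\<in>A. B T * W T) + (\<Sum>T\<in>A. B (\<sigma> T) * W T) + (\<Sum>T\<in>A. B (\<sigma> (\<sigma> T)) * W T) = 0"
    by (simp add: distrib_right sum.distrib)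
  have split: "(\<Sum>T\<in>A. B T * ((W T - W (\<sigma> T)) + (W T - W (\<sigma> (\<sigma> T))))) =
      ((\<Sum>T\<in>A. B T * W T) - (\<Sum>T\<in>A. B T * W (\<sigma> T))) + ((\<Sum>T\<in>A. B T * W T) - (\<Sum>T\<in>A. B T * W (\<sigma> (\<sigma> T))))"
    by (simp only: distrib_left right_diff_distrib sum.distrib sum_subtractf)
  have "a + b + c = 0 \<Longrightarrow> 3 * a = (a - c) + (a - b)" for a b c :: complex by algebra
  from this[OF zero] show ?thesis unfolding split e1 e2 .
qed

text \<open>Three times the combination is a combination of differences of words along orbits.\<close>
lemma Vzero_orbit_balanced_sum:
  assumes fA: "finite A" and \<sigma>A: "\<And>T. T \<in> A \<Longrightarrow> \<sigma> T \<in> A" and \<sigma>3: "\<And>T. \<sigma> (\<sigma> (\<sigma> T)) = T"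
    and balanced: "\<And>T. T \<in> A \<Longrightarrow> B T + B (\<sigma> T) + B (\<sigma> (\<sigma> T)) = 0"
    and equiv: "\<And>T. T \<in> A \<Longrightarrow> B T \<noteq> 0 \<Longrightarrow>
      Vzero I Q h t (\<lambda>u. W T u - W (\<sigma> T) u) \<and> Vzero I Q h t (\<lambda>u. W (\<sigma> T) u - W (\<sigma> (\<sigma> T)) u)"
  shows "Vzero I Q h t (\<lambda>u. \<Sum>T\<in>A. B T * W T u)"
proof -
  let ?D = "\<lambda>T u. (W T u - W (\<sigma> T) u) + (W T u - W (\<sigma> (\<sigma> T)) u)"
  have "Vzero I Q h t (\<lambda>u. \<Sum>T\<in>A. B T * ?D T u)"
  proof (rule Vzero_sum[OF fA])
    fix T assume T: "T \<in> A"
    show "Vzero I Q h t (\<lambda>u. B T * ?D T u)"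
    proof (cases "B T = 0")
      case False
      then have "Vzero I Q h t (\<lambda>u. (W T u - W (\<sigma> T) u) + ((W T u - W (\<sigma> T) u) + (W (\<sigma> T) u - W (\<sigma> (\<sigma> T)) u)))"
        using equiv[OF T] by (intro Vzero_add) auto
      then show ?thesis by (intro Vzero_scale) (elim Vzero_ext, simp)
    qed (simp add: Vzero_zero)
  qed
  then have "Vzero I Q h t (\<lambda>u. 1 / 3 * (\<Sum>T\<in>A. B T * ?D T u))" by (rule Vzero_scale)
  moreover have three: "3 * (\<Sum>T\<in>A. B T * W T u) = (\<Sum>T\<in>A. B T * ?D T u)" for u
    using sum_orbit_balanced[where W = "\<lambda>T. W T u" and \<sigma> = \<sigma> and B = B, OF fA \<sigma>A \<sigma>3 balanced] by simp
  ultimately show ?thesis by (elim Vzero_ext) (simp only: flip: three, simp)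
qed

lemma Vzero_hexpath_rot_hex:
  assumes T: "T \<in> (Q \<times> Q \<times> Q) \<times> (Q \<times> Q \<times> Q)" and cl: "closed_hex h t T" and hI: "h ` Q \<subseteq> I"
  shows "Vzero I Q h t (\<lambda>u. pvec (hexpath h T) u - pvec (hexpath h (rot_hex T)) u)"
proof -
  obtain x a y d z e where T_eq: "T = ((x, a, y), (d, z, e))" by (metis prod.collapse)
  let ?p = "(h x, [(x, False), (a, True)])"
  let ?q = "(h y, [(y, False), (d, True), (z, False), (e, True)])"
  have c: "t x = t a" "h a = h y" "t y = t d" "h d = h z" "t z = t e" "h e = h x"
    using cl unfolding T_eq closed_hex_def by auto
  have "x \<in> Q" "a \<in> Q" "y \<in> Q" "d \<in> Q" "z \<in> Q" "e \<in> Q" using T unfolding T_eq by auto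
  then have "valid_path I Q h t ?p" "valid_path I Q h t ?q"
    unfolding valid_path_def using c hI by (simp_all only: snd_conv fst_conv chain_Cons_Cons) (auto simp: dh_def dt_def)
  then have "Vzero I Q h t (\<lambda>u. pvec (fst ?p, snd ?p @ snd ?q) u
      - (-1) ^ (nstar (snd ?p) * nstar (snd ?q)) * pvec (fst ?q, snd ?q @ snd ?p) u)"
    by (rule Vzero_commutator_pvec) (use c in \<open>auto simp: ptail_def dt_def\<close>)
  then show ?thesis unfolding T_eq by (simp add: hexpath_def rot_hex_def nstar_def)
qed

lemma Vzero_vbracket_of_aybe:
  assumes fQ: "finite Q" and uq: "uq_coeffs Q h t R" and hI: "h ` Q \<subseteq> I"
    and aybe: "\<forall>T. aybe_coeff Q R T + aybe_coeff Q R (rot_hex T) + aybe_coeff Q R (rot_hex (rot_hex T)) = 0"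
  shows "Vzero I Q h t (\<lambda>u. \<Sum>T\<in>(Q \<times> Q \<times> Q) \<times> (Q \<times> Q \<times> Q). 8 * aybe_coeff Q R T * pvec (hexpath h T) u)"
proof (rule Vzero_orbit_balanced_sum[where \<sigma> = rot_hex])
  show "finite ((Q \<times> Q \<times> Q) \<times> (Q \<times> Q \<times> Q))" using fQ by simp
  show "8 * aybe_coeff Q R T + 8 * aybe_coeff Q R (rot_hex T) + 8 * aybe_coeff Q R (rot_hex (rot_hex T)) = 0" for T
    using aybe[rule_format, of T] by (metis distrib_left mult_zero_right)
  fix T assume T: "T \<in> (Q \<times> Q \<times> Q) \<times> (Q \<times> Q \<times> Q)" and "8 * aybe_coeff Q R T \<noteq> 0"
  then have cl: "closed_hex h t T" using aybe_coeff_nonzero[OF uq] by simp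
  show "Vzero I Q h t (\<lambda>u. pvec (hexpath h T) u - pvec (hexpath h (rot_hex T)) u) \<and>
      Vzero I Q h t (\<lambda>u. pvec (hexpath h (rot_hex T)) u - pvec (hexpath h (rot_hex (rot_hex T))) u)"
    using Vzero_hexpath_rot_hex[OF T cl hI]
      Vzero_hexpath_rot_hex[OF rot_hex_mem[OF T] closed_hex_rot_hex[OF cl] hI]
    by (rule conjI)
qed (simp_all add: rot_hex_mem)

lemma nstar_take_drop: "nstar (take m ws) + nstar (drop m ws) = nstar ws"
  unfolding nstar_def by (metis append_take_drop_id filter_append length_append)

lemma nstar_rotate: "nstar (rotate k ws) = nstar ws"
  using nstar_take_drop[of "k mod length ws" ws] unfolding nstar_def rotate_drop_take by simp

lemma graded_cyclic_signs_odd: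
  assumes "odd (nstar w)"
  shows "graded_cyclic_signs (\<lambda>_. 1) w"
  unfolding graded_cyclic_signs_def
proof (intro allI impI)
  fix k m
  let ?A = "nstar (take m (rotate k w))" and ?B = "nstar (drop m (rotate k w))"
  have "odd (?A + ?B)" using nstar_take_drop[of m "rotate k w"] nstar_rotate[of k w] assms by simp
  then have "even (?A * ?B)" by auto
  then show "(1::complex) = (-1) ^ (?A * ?B) * 1" by simp
qed

lemma cyclic_word_hexpath:
  assumes "closed_hex h t T"
  shows "cyclic_word h t (snd (hexpath h T))"
proof -
  obtain x a y d z e where T: "T = ((x, a, y), (d, z, e))" by (metis prod.collapse)
  let ?w = "[(x, False), (a, True), (y, False), (d, True), (z, False), (e, True)]"
  have c: "t x = t a \<and> h a = h y \<and> t y = t d \<and> h d = h z \<and> t z = t e \<and> h e = h x"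
    using assms unfolding T closed_hex_def by simp
  have "dt h t (?w ! i) = dh h t (?w ! (Suc i mod length ?w))" if "i < length ?w" for i
  proof -
    from that have "i \<in> {0, 1, 2, 3, 4, 5}" by auto
    then show ?thesis using c by (auto simp: dt_def dh_def)
  qed
  then show ?thesis unfolding cyclic_word_def T hexpath_def by simp
qed

lemma rotate_list6:
  "rotate 1 [p0, p1, p2, p3, p4, p5] = [p1, p2, p3, p4, p5, p0]"
  "rotate 2 [p0, p1, p2, p3, p4, p5] = [p2, p3, p4, p5, p0, p1]"
  "rotate 3 [p0, p1, p2, p3, p4, p5] = [p3, p4, p5, p0, p1, p2]"
  "rotate 4 [p0, p1, p2, p3, p4, p5] = [p4, p5, p0, p1, p2, p3]"
  "rotate 5 [p0, p1, p2, p3, p4, p5] = [p5, p0, p1, p2, p3, p4]"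
  by (simp_all add: numeral_eq_Suc rotate1_def)

lemma sum6: "(\<Sum>k<(6::nat). g k) = g 0 + g 1 + g 2 + g 3 + g 4 + (g 5 :: 'a::comm_monoid_add)"
  by (simp add: eval_nat_numeral)

lemma sum_pvec_hexpath_at:
  assumes "finite A" "T \<in> A"
  shows "(\<Sum>T'\<in>A. c T' * pvec (hexpath h T') (hexpath h T)) = (c T :: complex)"
proof -
  have "hexpath h T' = hexpath h T \<Longrightarrow> T' = T" for T'
    unfolding hexpath_def by (auto split: prod.splits)
  then have "(\<Sum>T'\<in>A. c T' * pvec (hexpath h T') (hexpath h T)) = (\<Sum>T'\<in>A. if T' = T then c T' else 0)"
    by (intro sum.cong refl) (auto simp: pvec_def)
  then show ?thesis using assms by simp
qed

lemma sum_pvec_hexpath_starred_head: "(\<Sum>T\<in>A. c T * pvec (hexpath h T) (v, (b, True) # ws)) = (0::complex)"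
  by (intro sum.neutral) (auto simp: pvec_def hexpath_def split: prod.splits)

text \<open>Of the six rotations of a hexagonal word, the three starting with a starred letter are not
  of the form hexpath, and the other three are the rotation orbit of T.\<close>
lemma cyclic_trace_sum_pvec_hexpath:
  assumes "finite A" "T \<in> A" "rot_hex T \<in> A" "rot_hex (rot_hex T) \<in> A"
  shows "cyclic_trace h t (\<lambda>_. 1) (snd (hexpath h T)) (\<lambda>u. \<Sum>T'\<in>A. c T' * pvec (hexpath h T') u) =
    c T + c (rot_hex T) + c (rot_hex (rot_hex T))"
proof -
  obtain x a y d z e where T: "T = ((x, a, y), (d, z, e))" by (metis prod.collapse)
  let ?w = "[(x, False), (a, True), (y, False), (d, True), (z, False), (e, True)]"
  have w: "snd (hexpath h T) = ?w" by (simp add: T hexpath_def)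
  have len: "length ?w = 6" by simp
  have r0: "word_path h t (rotate 0 ?w) = hexpath h T"
    and r2: "word_path h t (rotate 2 ?w) = hexpath h (rot_hex T)"
    and r4: "word_path h t (rotate 4 ?w) = hexpath h (rot_hex (rot_hex T))"
    by (simp_all add: T rotate_list6 word_path_def hexpath_def rot_hex_def dh_def)
  have r1: "word_path h t (rotate 1 ?w) = (dh h t (a, True), (a, True) # [(y, False), (d, True), (z, False), (e, True), (x, False)])"
    and r3: "word_path h t (rotate 3 ?w) = (dh h t (d, True), (d, True) # [(z, False), (e, True), (x, False), (a, True), (y, False)])"
    and r5: "word_path h t (rotate 5 ?w) = (dh h t (e, True), (e, True) # [(x, False), (a, True), (y, False), (d, True), (z, False)])"
    by (simp_all add: rotate_list6 word_path_def)
  show ?thesis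
    unfolding cyclic_trace_def w len sum6 r0 r1 r2 r3 r4 r5
    by (simp only: sum_pvec_hexpath_at[OF assms(1)] assms(2-4) sum_pvec_hexpath_starred_head) simp
qed

lemma aybe_orbit_of_Vzero:
  assumes fQ: "finite Q" and uq: "uq_coeffs Q h t R"
    and V: "Vzero I Q h t (\<lambda>u. \<Sum>T\<in>(Q \<times> Q \<times> Q) \<times> (Q \<times> Q \<times> Q). 8 * aybe_coeff Q R T * pvec (hexpath h T) u)"
  shows "aybe_coeff Q R T + aybe_coeff Q R (rot_hex T) + aybe_coeff Q R (rot_hex (rot_hex T)) = 0"
proof (cases "aybe_coeff Q R T = 0 \<and> aybe_coeff Q R (rot_hex T) = 0 \<and> aybe_coeff Q R (rot_hex (rot_hex T)) = 0")
  case False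
  let ?A = "(Q \<times> Q \<times> Q) \<times> (Q \<times> Q \<times> Q)"
  let ?tr = "cyclic_trace h t (\<lambda>_. 1) (snd (hexpath h T))"
  have T: "T \<in> ?A \<and> closed_hex h t T" by (rule aybe_coeff_orbit_nonzero[OF uq]) (use False in blast)
  have "?tr (\<lambda>u. \<Sum>T\<in>?A. 8 * aybe_coeff Q R T * pvec (hexpath h T) u) = 0"
  proof (rule cyclic_trace_Vzero[OF cyclic_word_hexpath _ graded_cyclic_signs_odd V])
    show "closed_hex h t T" using T by blast
    show "snd (hexpath h T) \<noteq> []" by (simp add: hexpath_def split: prod.split)
    show "odd (nstar (snd (hexpath h T)))" by (simp add: hexpath_def nstar_def split: prod.split)
  qed
  moreover have "?tr (\<lambda>u. \<Sum>T\<in>?A. 8 * aybe_coeff Q R T * pvec (hexpath h T) u) =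
      8 * aybe_coeff Q R T + 8 * aybe_coeff Q R (rot_hex T) + 8 * aybe_coeff Q R (rot_hex (rot_hex T))"
    using fQ T rot_hex_mem[of T Q] rot_hex_mem[of "rot_hex T" Q] by (intro cyclic_trace_sum_pvec_hexpath) simp_all
  ultimately have "8 * (aybe_coeff Q R T + aybe_coeff Q R (rot_hex T) + aybe_coeff Q R (rot_hex (rot_hex T))) = 0"
    by (simp only: distrib_left)
  then show ?thesis by (metis mult_eq_0_iff zero_neq_numeral)
qed simp

lemma Vzero_vbracket_PiR_iff_AYBE:
  assumes fQ: "finite Q" and uq: "uq_coeffs Q h t R" and hI: "h ` Q \<subseteq> I" and tI: "t ` Q \<subseteq> I"
  shows "Vzero I Q h t (vbracket I Q h t 2 2 (PiR Q h R) (PiR Q h R)) \<longleftrightarrow> AYBE Q h t (r_of Q h t R)"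
  unfolding vbracket_PiR[OF fQ uq hI tI] AYBE_r_of_iff[OF fQ uq]
  using aybe_orbit_of_Vzero[OF fQ uq] Vzero_vbracket_of_aybe[OF fQ uq hI] by blast

theorem mainTheorem5:
  fixes I :: "'v set" and Q :: "'e set" and h t :: "'e \<Rightarrow> 'v"
  assumes "finite I" and "finite Q" and "h ` Q \<subseteq> I" and "t ` Q \<subseteq> I"
  shows
    "(\<forall>R. uq_coeffs Q h t R \<longrightarrow>
         is_tens2 Q h t (r_of Q h t R) \<and> skew_tens Q h t (r_of Q h t R))
   \<and> (\<forall>R R'. uq_coeffs Q h t R \<longrightarrow> uq_coeffs Q h t R' \<longrightarrow>
         (Vzero I Q h t (\<lambda>u. PiR Q h R u - PiR Q h R' u) \<longleftrightarrow> r_of Q h t R = r_of Q h t R'))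
   \<and> (\<forall>r. is_tens2 Q h t r \<and> skew_tens Q h t r \<longrightarrow>
         (\<exists>R. uq_coeffs Q h t R \<and> r_of Q h t R = r))
   \<and> (\<forall>R. uq_coeffs Q h t R \<longrightarrow>
         (Vzero I Q h t (vbracket I Q h t 2 2 (PiR Q h R) (PiR Q h R)) \<longleftrightarrow> AYBE Q h t (r_of Q h t R)))"
  using r_of_tens2_skew[OF assms(2)] Vzero_PiR_diff_iff[OF assms(2)] r_of_surj[OF assms(2)]
    Vzero_vbracket_PiR_iff_AYBE[OF assms(2) _ assms(3,4)]
  by blast

end
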